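(* Let $G$ be the group of affine transformations $T_{a,b}:x\mapsto ax+b$ of $\mathbb{Z}/8\mathbb{Z}$ ($a\in(\mathbb{Z}/8\mathbb{Z})^\times$, $b\in\mathbb{Z}/8\mathbb{Z}$), let $U_1=\langle T_{a,0}:a\in(\mathbb{Z}/8\mathbb{Z})^\times\rangle$, $U_2=\langle T_{-1,0},T_{3,4}\rangle$, and $\Theta=U_1-U_2$ (a $G$-relation). Let $\rho$ be an irreducible $\mathbb{Q}[G]$-representation. Then $\mathcal{C}_\Theta(\rho)\equiv2\pmod{(\mathbb{Q}^\times)^2}$ if $\rho\cong I$, and $\mathcal{C}_\Theta(\rho)\equiv1\pmod{(\mathbb{Q}^\times)^2}$ otherwise.
   Context: Let $N=\langle T_{1,b}:b\in\mathbb{Z}/8\mathbb{Z}\rangle$ and $\chi$ a faithful one-dimensional complex character of $N$; $I=\mathrm{Ind}_N^G\chi$ is a $4$-dimensional irreducible representation, realisable over $\mathbb{Q}$ and independent of the choice of $\chi$, regarded as an irreducible $\mathbb{Q}[G]$-representation. A $G$-relation is a formal integer combination $\sum_jn_jV_j$ of subgroups with $\bigoplus_{n_j>0}\mathbb{Q}[G/V_j]^{n_j}\cong\bigoplus_{n_j<0}\mathbb{Q}[G/V_j]^{-n_j}$; for a $\mathbb{Q}[G]$-module $A$ with any $G$-invariant non-degenerate $\mathbb{Q}$-bilinear pairing, $\mathcal{C}_\Theta(A)=\prod_j\det(\tfrac1{\#V_j}\langle\cdot,\cdot\rangle\mid A^{V_j})^{n_j}\in\mathbb{Q}^\times/(\mathbb{Q}^\times)^2$,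 independent of the pairing. *)

theory Defs
  imports "Jordan_Normal_Form.Determinant"
begin

text \<open>Z/8Z is modelled by the residues 0..7 (type nat, arithmetic mod 8).
  The affine map T_{a,b} : x -> a x + b is the pair (a,b).\<close>

definition units8 :: "nat set" where
  "units8 = {a. a < 8 \<and> coprime a 8}"

definition Gaff :: "(nat \<times> nat) set" where
  "Gaff = {(a, b). a \<in> units8 \<and> b < 8}"

text \<open>Composition T_{a,b} o T_{c,d} = T_{ac, ad+b}.\<close>
fun gmul :: "nat \<times> nat \<Rightarrow> nat \<times> nat \<Rightarrow> nat \<times> nat" where
  "gmul (a, b) (c, d) = ((a * c) mod 8, (a * d + b) mod 8)"

definition gone :: "nat \<times> nat" where
  "gone = (1, 0)"

inductive_set gen :: "(nat \<times> nat) set \<Rightarrow> (nat \<times> nat) set" for S where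
  gen_one: "gone \<in> gen S"
| gen_base: "x \<in> S \<Longrightarrow> x \<in> gen S"
| gen_mul: "x \<in> gen S \<Longrightarrow> y \<in> gen S \<Longrightarrow> gmul x y \<in> gen S"

definition U1 :: "(nat \<times> nat) set" where
  "U1 = gen {(a, 0) | a. a \<in> units8}"

text \<open>-1 in Z/8Z is the residue 7.\<close>
definition U2 :: "(nat \<times> nat) set" where
  "U2 = gen {(7, 0), (3, 4)}"

definition is_rep :: "nat \<Rightarrow> (nat \<times> nat \<Rightarrow> rat mat) \<Rightarrow> bool" where
  "is_rep n \<rho> \<longleftrightarrow>
     (\<forall>g\<in>Gaff. \<rho> g \<in> carrier_mat n n) \<and>
     \<rho> gone = 1\<^sub>m n \<and>
     (\<forall>g\<in>Gaff. \<forall>h\<in>Gaff. \<rho> (gmul g h) = \<rho> g * \<rho> h)"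

definition is_subspace :: "nat \<Rightarrow> rat vec set \<Rightarrow> bool" where
  "is_subspace n W \<longleftrightarrow> W \<subseteq> carrier_vec n \<and> 0\<^sub>v n \<in> W \<and>
     (\<forall>v\<in>W. \<forall>w\<in>W. v + w \<in> W) \<and> (\<forall>c. \<forall>v\<in>W. c \<cdot>\<^sub>v v \<in> W)"

definition irreducible_rep :: "nat \<Rightarrow> (nat \<times> nat \<Rightarrow> rat mat) \<Rightarrow> bool" where
  "irreducible_rep n \<rho> \<longleftrightarrow> is_rep n \<rho> \<and> n > 0 \<and>
     (\<forall>W. is_subspace n W \<and> (\<forall>g\<in>Gaff. \<forall>v\<in>W. \<rho> g *\<^sub>v v \<in> W)
          \<longrightarrow> W = {0\<^sub>v n} \<or> W = carrier_vec n)"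

text \<open>A rational model of
  Ind_N^G chi (chi faithful) is the field Q(zeta), zeta a primitive 8th root of
  unity, with T_{a,b} acting by x -> zeta^b * sigma_a(x), where sigma_a is the
  Galois automorphism zeta -> zeta^a.  Its complexification restricted to N is the
  sum of the four faithful characters of N, so it is Ind_N^G chi.  We use the
  Q-basis 1, zeta, zeta^2, zeta^3 (zeta^4 = -1); zeta_coord k is the coordinate
  vector of zeta^k.\<close>

definition N_sub :: "(nat \<times> nat) set" where
  "N_sub = gen {(1, b) | b. b < 8}"

definition zeta_coord :: "nat \<Rightarrow> rat vec" where
  "zeta_coord k = (if k mod 8 < 4 then unit_vec 4 (k mod 8)
                   else - unit_vec 4 (k mod 8 - 4))"

fun I_rep :: "nat \<times> nat \<Rightarrow> rat mat" where
  "I_rep (a, b) = mat 4 4 (\<lambda>(i, j). zeta_coord (b + a * j) $ i)"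

definition iso_to_I :: "nat \<Rightarrow> (nat \<times> nat \<Rightarrow> rat mat) \<Rightarrow> bool" where
  "iso_to_I n \<rho> \<longleftrightarrow> n = 4 \<and>
     (\<exists>P \<in> carrier_mat 4 4. invertible_mat P \<and> (\<forall>g\<in>Gaff. P * \<rho> g = I_rep g * P))"

text \<open>A bilinear pairing on Q^n is <v,w> = v^T B w; G-invariant and non-degenerate.\<close>
definition invariant_pairing :: "nat \<Rightarrow> (nat \<times> nat \<Rightarrow> rat mat) \<Rightarrow> rat mat \<Rightarrow> bool" where
  "invariant_pairing n \<rho> B \<longleftrightarrow> B \<in> carrier_mat n n \<and> det B \<noteq> 0 \<and>
     (\<forall>g\<in>Gaff. transpose_mat (\<rho> g) * B * \<rho> g = B)"

definition fixed_space :: "nat \<Rightarrow> (nat \<times> nat \<Rightarrow> rat mat) \<Rightarrow> (nat \<times> nat) set \<Rightarrow> rat vec set" where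
  "fixed_space n \<rho> V = {v \<in> carrier_vec n. \<forall>g\<in>V. \<rho> g *\<^sub>v v = v}"

definition basis_mat :: "nat \<Rightarrow> rat vec set \<Rightarrow> nat \<Rightarrow> rat mat \<Rightarrow> bool" where
  "basis_mat n W k M \<longleftrightarrow> M \<in> carrier_mat n k \<and>
     (\<forall>c\<in>carrier_vec k. M *\<^sub>v c = 0\<^sub>v n \<longrightarrow> c = 0\<^sub>v k) \<and>
     W = {M *\<^sub>v c | c. c \<in> carrier_vec k}"

text \<open>det( (1/#V) <.,.> | A^V ), computed in the basis given by the columns of M.\<close>
definition pairing_det :: "(nat \<times> nat) set \<Rightarrow> rat mat \<Rightarrow> rat mat \<Rightarrow> rat" where
  "pairing_det V B M = det ((1 / of_nat (card V)) \<cdot>\<^sub>m (transpose_mat M * B * M))"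

definition sq_class_eq :: "rat \<Rightarrow> rat \<Rightarrow> bool" where
  "sq_class_eq x c \<longleftrightarrow> (\<exists>q. q \<noteq> 0 \<and> x = c * q^2)"

end

(*
  If rho has no
  U1-fixed vector, it has no U2-fixed vector either and is not I (which has one); both
  determinants are then empty.

  Otherwise the Hecke operators x |-> avg_U1 (T_{1,a} x) on the U1-fixed vectors split
  every such vector into eigenvectors, each with one of four explicit spherical functions
  sph s.  For an eigenvector w of type s the translates T_{1,b} w generate rho and have
  Gram matrix <T_{1,a} w, T_{1,b} w> = sph s (b - a) <w, w>.  As the pairing is
  non-degenerate, a vector orthogonal to all translates vanishes.  Hence the U1-fixed
  space is the line through w, and, since the matrix <T_{1,a} w, avg_U2 (T_{1,b} w)> has
  rank one, the U2-fixed space is the line through w2 = avg_U2 (T_{1,b0} w), with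
  <w2, w2> = c <w, w> for c = 1/2 if s = Ind and c = 1 otherwise.  Because #U1 = #U2 the
  regulator constant is 1/c modulo squares.

  Finally rho is I exactly when s = Ind: then T_{1,j} w, j < 4, is a basis in which rho
  becomes I, and otherwise T_{1,4} fixes w although it acts as -1 on I.
*)

theory Submission
  imports Defs
begin

(* Keep residues such as (1, 2) as numerals; simp would otherwise turn them into Suc terms. *)
declare One_nat_def [simp del] numeral_2_eq_2 [symmetric, simp]

lemma nat_mod_add_right_cancel:
  fixes x y b m :: nat
  assumes "(x + b) mod m = (y + b) mod m"
  shows "x mod m = y mod m"
proof -
  have "(int x + int b) mod int m = (int y + int b) mod int m"
    using arg_cong[OF assms, of int] by (simp add: zmod_int)
  then have "int x mod int m = int y mod int m"
    by (simp add: mod_eq_dvd_iff)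
  then have "int (x mod m) = int (y mod m)"
    by (simp add: zmod_int)
  then show ?thesis
    by simp
qed

lemma mod_linear_cong:
  fixes p q r x y m :: nat
  shows "(p * x + q * y + r) mod m = (p * (x mod m) + q * (y mod m) + r) mod m"
proof -
  have split: "c * z = c * (z mod m) + m * (c * (z div m))" for c z
  proof -
    have "c * z = c * (z mod m + m * (z div m))"
      by simp
    also have "\<dots> = c * (z mod m) + m * (c * (z div m))"
      by (simp only: distrib_left mult.left_commute)
    finally show ?thesis .
  qed
  have "p * x + q * y + r = (p * (x mod m) + q * (y mod m) + r) + m * (p * (x div m) + q * (y div m))"
    using split[of p x] split[of q y] by (simp add: algebra_simps)
  then show ?thesis
    by (simp only: mod_mult_self2)
qed

lemma all_less_8_iff:
  "(\<forall>a<(8::nat). P a) \<longleftrightarrow> P 0 \<and> P 1 \<and> P 2 \<and> P 3 \<and> P 4 \<and> P 5 \<and> P 6 \<and> P 7"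
proof
  assume "P 0 \<and> P 1 \<and> P 2 \<and> P 3 \<and> P 4 \<and> P 5 \<and> P 6 \<and> P 7"
  moreover have "a < 8 \<Longrightarrow> a = 0 \<or> a = 1 \<or> a = 2 \<or> a = 3 \<or> a = 4 \<or> a = 5 \<or> a = 6 \<or> a = 7"
    for a :: nat by presburger
  ultimately show "\<forall>a<8. P a"
    by auto
qed auto

section \<open>The affine group and the subgroups U1, U2\<close>

lemma units8_eq: "units8 = {1, 3, 5, 7}"
proof -
  have "coprime a (8::nat) \<longleftrightarrow> odd a" for a
    using coprime_power_right_iff[of a 2 3] by simp
  moreover have "(a < 8 \<and> odd a) \<longleftrightarrow> a = 1 \<or> a = 3 \<or> a = 5 \<or> a = (7::nat)" for a
    by presburger
  ultimately show ?thesis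
    unfolding units8_def by auto
qed

lemma mem_Gaff_iff: "(a, b) \<in> Gaff \<longleftrightarrow> a \<in> {1, 3, 5, 7} \<and> b < 8"
  unfolding Gaff_def units8_eq by auto

lemma finite_Gaff: "finite Gaff"
  by (rule finite_subset[of _ "{..<8} \<times> {..<8}"]) (auto simp: Gaff_def units8_def)

lemma gmul_Gaff: "g \<in> Gaff \<Longrightarrow> h \<in> Gaff \<Longrightarrow> gmul g h \<in> Gaff"
  by (cases g; cases h) (auto simp: mem_Gaff_iff)

lemma units8_square: "a \<in> units8 \<Longrightarrow> a * a mod 8 = 1"
  by (auto simp: units8_eq)

lemma units8_mult_cancel:
  assumes "a \<in> units8" "a * x mod 8 = a * y mod 8" "x < 8" "y < 8"
  shows "x = y"
proof -
  have "z = a * (a * z mod 8) mod 8" if "z < 8" for z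
  proof -
    have "a * (a * z mod 8) mod 8 = (a * a mod 8) * z mod 8"
      by (simp add: mod_mult_right_eq mod_mult_left_eq mult.assoc)
    then show ?thesis
      using units8_square[OF assms(1)] that by simp
  qed
  then show ?thesis
    using assms(2-4) by metis
qed

lemma gmul_left_cancel:
  assumes "g \<in> Gaff" "h \<in> Gaff" "h' \<in> Gaff" and "gmul g h = gmul g h'"
  shows "h = h'"
proof -
  obtain a b c d c' d' where g: "g = (a, b)" and h: "h = (c, d)" and h': "h' = (c', d')"
    by (cases g; cases h; cases h') blast
  have a: "a \<in> units8" and lt: "c < 8" "d < 8" "c' < 8" "d' < 8"
    using assms(1-3) by (auto simp: g h h' Gaff_def units8_def)
  have "a * c mod 8 = a * c' mod 8" and "(a * d + b) mod 8 = (a * d' + b) mod 8"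
    using assms(4) by (simp_all add: g h h')
  moreover from this(2) have "a * d mod 8 = a * d' mod 8"
    by (rule nat_mod_add_right_cancel)
  ultimately have "c = c'" and "d = d'"
    using units8_mult_cancel[OF a] lt by blast+
  then show ?thesis
    by (simp add: h h')
qed

lemma gmul_right_cancel:
  assumes "g \<in> Gaff" "h \<in> Gaff" "h' \<in> Gaff" and "gmul h g = gmul h' g"
  shows "h = h'"
proof -
  obtain a b c d c' d' where g: "g = (a, b)" and h: "h = (c, d)" and h': "h' = (c', d')"
    by (cases g; cases h; cases h') blast
  have a: "a \<in> units8" and lt: "c < 8" "d < 8" "c' < 8" "d' < 8"
    using assms(1-3) by (auto simp: g h h' Gaff_def units8_def)
  have "a * c mod 8 = a * c' mod 8"
    using assms(4) by (simp add: g h h' mult.commute)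
  then have "c = c'"
    using units8_mult_cancel[OF a] lt by blast
  moreover have "(c * b + d) mod 8 = (c * b + d') mod 8"
    using assms(4) by (simp add: g h h' \<open>c = c'\<close>)
  then have "d mod 8 = d' mod 8"
    by (metis add.commute nat_mod_add_right_cancel)
  ultimately show ?thesis
    using lt by (simp add: h h')
qed

definition affine_subgroup :: "(nat \<times> nat) set \<Rightarrow> bool" where
  "affine_subgroup H \<longleftrightarrow> H \<subseteq> Gaff \<and> gone \<in> H \<and> (\<forall>g\<in>H. \<forall>h\<in>H. gmul g h \<in> H)"

lemma affine_subgroup_finite: "affine_subgroup H \<Longrightarrow> finite H"
  unfolding affine_subgroup_def using finite_Gaff finite_subset by blast

lemma affine_subgroup_card_pos: "affine_subgroup H \<Longrightarrow> card H > 0"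
  using affine_subgroup_finite by (auto simp: affine_subgroup_def card_gt_0_iff)

lemma affine_subgroup_translation:
  assumes H: "affine_subgroup H" and g: "g \<in> H"
  shows "bij_betw (gmul g) H H" and "bij_betw (\<lambda>h. gmul h g) H H"
proof -
  have sub: "H \<subseteq> Gaff" and closed: "gmul g ` H \<subseteq> H" "(\<lambda>h. gmul h g) ` H \<subseteq> H"
    using H g by (auto simp: affine_subgroup_def)
  have "inj_on (gmul g) H" "inj_on (\<lambda>h. gmul h g) H"
  proof -
    have "x = y" if "x \<in> H" "y \<in> H" "gmul g x = gmul g y \<or> gmul x g = gmul y g" for x y
      using that sub g gmul_left_cancel[of g x y] gmul_right_cancel[of g x y] by blast
    then show "inj_on (gmul g) H" "inj_on (\<lambda>h. gmul h g) H"
      by (auto intro!: inj_onI)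
  qed
  then show "bij_betw (gmul g) H H" and "bij_betw (\<lambda>h. gmul h g) H H"
    using closed affine_subgroup_finite[OF H]
    by (simp_all add: bij_betw_def card_image card_subset_eq)
qed

lemma gen_least:
  assumes "S \<subseteq> T" "gone \<in> T" "\<And>x y. x \<in> T \<Longrightarrow> y \<in> T \<Longrightarrow> gmul x y \<in> T"
  shows "gen S \<subseteq> T"
proof
  fix x assume "x \<in> gen S"
  then show "x \<in> T"
    by (induction rule: gen.induct) (use assms in auto)
qed

lemma affine_subgroup_gen: "S \<subseteq> Gaff \<Longrightarrow> affine_subgroup (gen S)"
  unfolding affine_subgroup_def
  using gen_least[of S Gaff] gmul_Gaff gen.gen_one gen.gen_mul
  by (auto simp: gone_def mem_Gaff_iff)

lemma U1_eq: "U1 = {(1, 0), (3, 0), (5, 0), (7, 0)}"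
proof
  show "U1 \<subseteq> {(1, 0), (3, 0), (5, 0), (7, 0)}"
    unfolding U1_def by (rule gen_least) (auto simp: units8_eq gone_def)
  show "{(1, 0), (3, 0), (5, 0), (7, 0)} \<subseteq> U1"
    unfolding U1_def using gen_one gen_base by (fastforce simp: units8_eq gone_def)
qed

lemma U2_eq: "U2 = {(1, 0), (7, 0), (3, 4), (5, 4)}"
proof
  show "U2 \<subseteq> {(1, 0), (7, 0), (3, 4), (5, 4)}"
    unfolding U2_def by (rule gen_least) (auto simp: gone_def)
  have gens: "(7, 0) \<in> U2" "(3, 4) \<in> U2"
    unfolding U2_def by (auto intro: gen_base)
  then have "gmul (7, 0) (3, 4) \<in> U2"
    unfolding U2_def by (rule gen_mul)
  then show "{(1, 0), (7, 0), (3, 4), (5, 4)} \<subseteq> U2"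
    using gens gen_one[of "{(7, 0), (3, 4)}"] by (auto simp: U2_def gone_def)
qed

lemma affine_subgroup_U1: "affine_subgroup U1"
  unfolding U1_def by (rule affine_subgroup_gen) (auto simp: Gaff_def)

lemma affine_subgroup_U2: "affine_subgroup U2"
  unfolding U2_def by (rule affine_subgroup_gen) (auto simp: mem_Gaff_iff)

lemma card_U1: "card U1 = 4"
  unfolding U1_eq by simp

lemma card_U2: "card U2 = 4"
  unfolding U2_eq by simp

section \<open>Matrices, bases and Gram determinants\<close>

lemma mult_unit_vec_eq_col:
  assumes "(A :: 'a :: comm_ring_1 mat) \<in> carrier_mat nr nc" "j < nc"
  shows "A *\<^sub>v unit_vec nc j = col A j"
  using assms by (intro eq_vecI) (auto simp: scalar_prod_right_unit)

lemma invertible_mat_obtain_inverse: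
  assumes P: "(P :: 'a :: comm_ring_1 mat) \<in> carrier_mat k k" and inv: "invertible_mat P"
  obtains P' where "P' \<in> carrier_mat k k" "P * P' = 1\<^sub>m k" "P' * P = 1\<^sub>m k"
proof -
  obtain P' where PP': "inverts_mat P P'" and P'P: "inverts_mat P' P"
    using inv unfolding invertible_mat_def by blast
  have "dim_row P' = k"
    using arg_cong[OF P'P[unfolded inverts_mat_def], of dim_col] P by simp
  moreover have "dim_col P' = k"
    using arg_cong[OF PP'[unfolded inverts_mat_def], of dim_col] P by simp
  ultimately have "P' \<in> carrier_mat k k"
    by blast
  with PP' P'P P show ?thesis
    by (intro that) (auto simp: inverts_mat_def)
qed

lemma mat_inverse_dims_eq:
  assumes A: "(A :: 'a :: {comm_ring_1, ring_char_0} mat) \<in> carrier_mat m k" and B: "B \<in> carrier_mat k m"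
    and AB: "A * B = 1\<^sub>m m" and BA: "B * A = 1\<^sub>m k"
  shows "m = k"
proof -
  have "of_nat m = (\<Sum>i<m. (A * B) $$ (i, i) :: 'a)"
    by (simp add: AB)
  also have "\<dots> = (\<Sum>i<m. \<Sum>j<k. A $$ (i, j) * B $$ (j, i))"
    using A B by (auto simp: scalar_prod_def lessThan_atLeast0 intro!: sum.cong)
  also have "\<dots> = (\<Sum>j<k. \<Sum>i<m. B $$ (j, i) * A $$ (i, j))"
    by (subst sum.swap) (simp add: mult.commute)
  also have "\<dots> = (\<Sum>j<k. (B * A) $$ (j, j))"
    using A B by (auto simp: scalar_prod_def lessThan_atLeast0 intro!: sum.cong)
  also have "\<dots> = of_nat k"
    by (simp add: BA)
  finally show ?thesis
    by simp
qed

lemma mat_eq_one_if_fixes_all: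
  assumes A: "(A :: 'a :: comm_ring_1 mat) \<in> carrier_mat n n"
    and fixed: "\<And>x. x \<in> carrier_vec n \<Longrightarrow> A *\<^sub>v x = x"
  shows "A = 1\<^sub>m n"
proof (rule eq_matI)
  fix i j assume "i < dim_row (1\<^sub>m n :: 'a mat)" "j < dim_col (1\<^sub>m n :: 'a mat)"
  then have ij: "i < n" "j < n"
    by auto
  have "A $$ (i, j) = col A j $ i"
    using A ij by simp
  also have "\<dots> = unit_vec n j $ i"
    using fixed[of "unit_vec n j"] mult_unit_vec_eq_col[OF A ij(2)] by simp
  finally show "A $$ (i, j) = (1\<^sub>m n :: 'a mat) $$ (i, j)"
    using ij by simp
qed (use A in auto)

lemma basis_mat_col:
  assumes b: "basis_mat n W k M" and j: "j < k"
  shows "col M j \<in> W" and "col M j \<noteq> 0\<^sub>v n"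
proof -
  have M: "M \<in> carrier_mat n k"
    using b by (simp add: basis_mat_def)
  have col: "col M j = M *\<^sub>v unit_vec k j"
    using M j by (simp add: mult_unit_vec_eq_col)
  then show "col M j \<in> W"
    using b by (auto simp: basis_mat_def)
  show "col M j \<noteq> 0\<^sub>v n"
  proof
    assume "col M j = 0\<^sub>v n"
    then have "unit_vec k j = (0\<^sub>v k :: rat vec)"
      using b col by (simp add: basis_mat_def)
    then show False
      using j by simp
  qed
qed

lemma basis_mat_zero_space:
  assumes "basis_mat n {0\<^sub>v n} k M"
  shows "k = 0"
proof (rule ccontr)
  assume "k \<noteq> 0"
  then show False
    using basis_mat_col[OF assms, of 0] by simp
qed

lemma basis_mat_line:
  assumes y: "y \<in> carrier_vec n" "y \<noteq> 0\<^sub>v n"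
    and b: "basis_mat n {t \<cdot>\<^sub>v y | t. True} k M"
  shows "M \<in> carrier_mat n 1 \<and> (\<exists>\<alpha>. \<alpha> \<noteq> 0 \<and> col M 0 = \<alpha> \<cdot>\<^sub>v y)"
proof -
  from b have M: "M \<in> carrier_mat n k" and inj: "\<And>c. c \<in> carrier_vec k \<Longrightarrow> M *\<^sub>v c = 0\<^sub>v n \<Longrightarrow> c = 0\<^sub>v k"
    and W: "{t \<cdot>\<^sub>v y | t. True} = {M *\<^sub>v c | c. c \<in> carrier_vec k}"
    unfolding basis_mat_def by auto
  have "k \<noteq> 0"
  proof
    assume "k = 0"
    have "y \<in> {t \<cdot>\<^sub>v y | t. True}"
      using y by (intro CollectI exI[of _ 1]) simp
    then obtain c where c: "c \<in> carrier_vec k" "y = M *\<^sub>v c"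
      unfolding W by auto
    have "M *\<^sub>v c = 0\<^sub>v n"
      using M c \<open>k = 0\<close> by (intro eq_vecI) (auto simp: scalar_prod_def)
    then show False
      using c y by simp
  qed
  obtain t0 where t0: "col M 0 = t0 \<cdot>\<^sub>v y"
    using basis_mat_col(1)[OF b] \<open>k \<noteq> 0\<close> by auto
  have "t0 \<noteq> 0"
  proof
    assume "t0 = 0"
    then have "col M 0 = 0\<^sub>v n"
      using t0 y by (intro eq_vecI) auto
    then show False
      using basis_mat_col(2)[OF b] \<open>k \<noteq> 0\<close> by simp
  qed
  have "k = 1"
  proof (rule ccontr)
    assume "k \<noteq> 1"
    then have k: "1 < k"
      using \<open>k \<noteq> 0\<close> by simp
    obtain t1 where t1: "col M 1 = t1 \<cdot>\<^sub>v y"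
      using basis_mat_col(1)[OF b k] by auto
    define c where "c = t1 \<cdot>\<^sub>v unit_vec k 0 + (- t0) \<cdot>\<^sub>v unit_vec k 1"
    have "M *\<^sub>v c = t1 \<cdot>\<^sub>v col M 0 + (- t0) \<cdot>\<^sub>v col M 1"
      using M k by (simp add: c_def mult_add_distrib_mat_vec[OF M] mult_mat_vec[OF M] mult_unit_vec_eq_col)
    also have "\<dots> = 0\<^sub>v n"
      unfolding t0 t1 using y by (intro eq_vecI) auto
    finally have "c = 0\<^sub>v k"
      using inj by (simp add: c_def)
    then have "c $ 1 = 0"
      using k by simp
    then show False
      using k \<open>t0 \<noteq> 0\<close> by (simp add: c_def)
  qed
  then show ?thesis
    using M t0 \<open>t0 \<noteq> 0\<close> by auto
qed

lemma pairing_det_zero_space: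
  assumes "basis_mat n {0\<^sub>v n} k M" "B \<in> carrier_mat n n"
  shows "pairing_det V B M = 1"
proof -
  have "M \<in> carrier_mat n 0"
    using assms(1) basis_mat_zero_space[OF assms(1)] by (simp add: basis_mat_def)
  then show ?thesis
    using assms(2) by (simp add: pairing_det_def)
qed

lemma pairing_det_line:
  assumes y: "y \<in> carrier_vec n" "y \<noteq> 0\<^sub>v n"
    and b: "basis_mat n {t \<cdot>\<^sub>v y | t. True} k M" and B: "B \<in> carrier_mat n n"
  obtains \<alpha> where "\<alpha> \<noteq> 0" "pairing_det V B M = \<alpha>\<^sup>2 * (y \<bullet> (B *\<^sub>v y)) / of_nat (card V)"
proof -
  obtain \<alpha> where M: "M \<in> carrier_mat n 1" and "\<alpha> \<noteq> 0" and col: "col M 0 = \<alpha> \<cdot>\<^sub>v y"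
    using basis_mat_line[OF y b] by blast
  have "transpose_mat M * B * M \<in> carrier_mat 1 1"
    using M B by simp
  then have "det ((1 / of_nat (card V)) \<cdot>\<^sub>m (transpose_mat M * B * M))
      = (transpose_mat M * B * M) $$ (0, 0) / of_nat (card V)"
    using M by (simp add: det_single)
  also have "(transpose_mat M * B * M) $$ (0, 0) = row (transpose_mat M * B) 0 \<bullet> col M 0"
    by (rule index_mult_mat(1)) (use M B in auto)
  also have "row (transpose_mat M * B) 0 = vec n (\<lambda>j. row (transpose_mat M) 0 \<bullet> col B j)"
    by (rule row_mult) (use M B in auto)
  also have "row (transpose_mat M) 0 = col M 0"
    using M by simp
  also have "vec n (\<lambda>j. col M 0 \<bullet> col B j) \<bullet> col M 0 = col M 0 \<bullet> vec n (\<lambda>i. row B i \<bullet> col M 0)"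
    by (rule assoc_scalar_prod) (use M B in auto)
  also have "vec n (\<lambda>i. row B i \<bullet> col M 0) = B *\<^sub>v col M 0"
    using B by (simp add: mult_mat_vec_def)
  finally have "pairing_det V B M = col M 0 \<bullet> (B *\<^sub>v col M 0) / of_nat (card V)"
    by (simp add: pairing_det_def)
  moreover have "col M 0 \<bullet> (B *\<^sub>v col M 0) = \<alpha>\<^sup>2 * (y \<bullet> (B *\<^sub>v y))"
    using y B by (simp add: col mult_mat_vec[OF B] power2_eq_square)
  ultimately show ?thesis
    using that[OF \<open>\<alpha> \<noteq> 0\<close>] by simp
qed

section \<open>Averaging over a subgroup\<close>

locale affine_rep =
  fixes n :: nat and \<rho> :: "nat \<times> nat \<Rightarrow> rat mat"
  assumes rep: "is_rep n \<rho>"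
begin

lemma rho_carrier [simp]: "g \<in> Gaff \<Longrightarrow> \<rho> g \<in> carrier_mat n n"
  using rep unfolding is_rep_def by auto

lemma dim_rho [simp]: "g \<in> Gaff \<Longrightarrow> dim_row (\<rho> g) = n" "g \<in> Gaff \<Longrightarrow> dim_col (\<rho> g) = n"
  using rho_carrier by blast+

lemma rho_one [simp]: "\<rho> (1, 0) = 1\<^sub>m n"
  using rep unfolding is_rep_def gone_def by auto

lemma rho_gmul: "g \<in> Gaff \<Longrightarrow> h \<in> Gaff \<Longrightarrow> \<rho> (gmul g h) = \<rho> g * \<rho> h"
  using rep unfolding is_rep_def by auto

lemma rho_mult_carrier [simp]: "g \<in> Gaff \<Longrightarrow> x \<in> carrier_vec n \<Longrightarrow> \<rho> g *\<^sub>v x \<in> carrier_vec n"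
  using rho_carrier mult_mat_vec_carrier by blast

lemma rho_rho [simp]:
  "g \<in> Gaff \<Longrightarrow> h \<in> Gaff \<Longrightarrow> x \<in> carrier_vec n \<Longrightarrow> \<rho> g *\<^sub>v (\<rho> h *\<^sub>v x) = \<rho> (gmul g h) *\<^sub>v x"
  by (simp add: rho_gmul assoc_mult_mat_vec[OF rho_carrier rho_carrier])

lemma rho_add [simp]:
  "g \<in> Gaff \<Longrightarrow> x \<in> carrier_vec n \<Longrightarrow> y \<in> carrier_vec n \<Longrightarrow> \<rho> g *\<^sub>v (x + y) = \<rho> g *\<^sub>v x + \<rho> g *\<^sub>v y"
  by (rule mult_add_distrib_mat_vec[OF rho_carrier])

lemma rho_smult [simp]:
  "g \<in> Gaff \<Longrightarrow> x \<in> carrier_vec n \<Longrightarrow> \<rho> g *\<^sub>v (c \<cdot>\<^sub>v x) = c \<cdot>\<^sub>v (\<rho> g *\<^sub>v x)"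
  by (rule mult_mat_vec[OF rho_carrier])

lemma rho_zero [simp]: "g \<in> Gaff \<Longrightarrow> \<rho> g *\<^sub>v 0\<^sub>v n = 0\<^sub>v n"
  by (intro eq_vecI) auto

definition avg :: "(nat \<times> nat) set \<Rightarrow> rat vec \<Rightarrow> rat vec" where
  "avg H x = vec n (\<lambda>i. (\<Sum>h\<in>H. (\<rho> h *\<^sub>v x) $ i) / of_nat (card H))"

lemma avg_carrier [simp]: "avg H x \<in> carrier_vec n"
  unfolding avg_def by simp

lemma index_avg: "i < n \<Longrightarrow> avg H x $ i = (\<Sum>h\<in>H. (\<rho> h *\<^sub>v x) $ i) / of_nat (card H)"
  unfolding avg_def by simp

lemma dim_avg [simp]: "dim_vec (avg H x) = n"
  unfolding avg_def by simp

lemma rho_avg: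
  assumes H: "H \<subseteq> Gaff" and g: "g \<in> Gaff" and x: "x \<in> carrier_vec n"
  shows "\<rho> g *\<^sub>v avg H x = vec n (\<lambda>i. (\<Sum>h\<in>H. (\<rho> (gmul g h) *\<^sub>v x) $ i) / of_nat (card H))"
proof (rule eq_vecI)
  fix i assume "i < dim_vec (vec n (\<lambda>i. (\<Sum>h\<in>H. (\<rho> (gmul g h) *\<^sub>v x) $ i) / of_nat (card H)))"
  then have i: "i < n" by simp
  have "(\<rho> g *\<^sub>v avg H x) $ i = (\<Sum>j<n. \<rho> g $$ (i, j) * ((\<Sum>h\<in>H. (\<rho> h *\<^sub>v x) $ j) / of_nat (card H)))"
    using i g by (auto simp: scalar_prod_def index_avg lessThan_atLeast0 intro!: sum.cong)
  also have "\<dots> = (\<Sum>h\<in>H. \<Sum>j<n. \<rho> g $$ (i, j) * (\<rho> h *\<^sub>v x) $ j) / of_nat (card H)"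
    by (simp add: sum_distrib_left sum_divide_distrib sum.swap[of _ H])
  also have "\<dots> = (\<Sum>h\<in>H. (\<rho> (gmul g h) *\<^sub>v x) $ i) / of_nat (card H)"
    using i g x H by (auto simp: scalar_prod_def lessThan_atLeast0 simp flip: rho_rho intro!: sum.cong)
  finally show "(\<rho> g *\<^sub>v avg H x) $ i = vec n (\<lambda>i. (\<Sum>h\<in>H. (\<rho> (gmul g h) *\<^sub>v x) $ i) / of_nat (card H)) $ i"
    using i by simp
qed (use g in simp)

lemma rho_avg_subgroup:
  assumes H: "affine_subgroup H" and g: "g \<in> H" and x: "x \<in> carrier_vec n"
  shows "\<rho> g *\<^sub>v avg H x = avg H x"
proof -
  have sub: "H \<subseteq> Gaff" and "g \<in> Gaff"
    using H g by (auto simp: affine_subgroup_def)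
  have "(\<Sum>h\<in>H. (\<rho> (gmul g h) *\<^sub>v x) $ i) = (\<Sum>h\<in>H. (\<rho> h *\<^sub>v x) $ i)" for i
    using sum.reindex_bij_betw[OF affine_subgroup_translation(1)[OF H g]] .
  then show ?thesis
    using rho_avg[OF sub \<open>g \<in> Gaff\<close> x] by (simp add: avg_def)
qed

lemma avg_rho_subgroup:
  assumes H: "affine_subgroup H" and g: "g \<in> H" and x: "x \<in> carrier_vec n"
  shows "avg H (\<rho> g *\<^sub>v x) = avg H x"
proof -
  have sub: "H \<subseteq> Gaff" and "g \<in> Gaff"
    using H g by (auto simp: affine_subgroup_def)
  then have "(\<Sum>h\<in>H. (\<rho> h *\<^sub>v (\<rho> g *\<^sub>v x)) $ i) = (\<Sum>h\<in>H. (\<rho> (gmul h g) *\<^sub>v x) $ i)" for i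
    using x by (intro sum.cong) auto
  also have "\<dots> i = (\<Sum>h\<in>H. (\<rho> h *\<^sub>v x) $ i)" for i
    using sum.reindex_bij_betw[OF affine_subgroup_translation(2)[OF H g]] .
  finally show ?thesis
    by (simp add: avg_def)
qed

lemma avg_fixed_space:
  "affine_subgroup H \<Longrightarrow> x \<in> carrier_vec n \<Longrightarrow> avg H x \<in> fixed_space n \<rho> H"
  unfolding fixed_space_def using rho_avg_subgroup by simp

lemma avg_eq_self:
  assumes H: "affine_subgroup H" and x: "x \<in> fixed_space n \<rho> H"
  shows "avg H x = x"
proof -
  have "(\<Sum>h\<in>H. (\<rho> h *\<^sub>v x) $ i) = of_nat (card H) * x $ i" for i
    using x by (simp add: fixed_space_def)
  then show ?thesis
    using x affine_subgroup_card_pos[OF H] by (intro eq_vecI) (auto simp: avg_def fixed_space_def)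
qed

lemma fixed_space_carrier: "x \<in> fixed_space n \<rho> H \<Longrightarrow> x \<in> carrier_vec n"
  unfolding fixed_space_def by simp

lemma zero_fixed_space: "H \<subseteq> Gaff \<Longrightarrow> 0\<^sub>v n \<in> fixed_space n \<rho> H"
  unfolding fixed_space_def by auto

lemma fixed_space_add:
  "x \<in> fixed_space n \<rho> H \<Longrightarrow> y \<in> fixed_space n \<rho> H \<Longrightarrow> H \<subseteq> Gaff \<Longrightarrow> x + y \<in> fixed_space n \<rho> H"
  unfolding fixed_space_def by auto

lemma fixed_space_smult:
  "x \<in> fixed_space n \<rho> H \<Longrightarrow> H \<subseteq> Gaff \<Longrightarrow> c \<cdot>\<^sub>v x \<in> fixed_space n \<rho> H"
  unfolding fixed_space_def by auto

lemma avg_add: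
  assumes "H \<subseteq> Gaff" "x \<in> carrier_vec n" "y \<in> carrier_vec n"
  shows "avg H (x + y) = avg H x + avg H y"
  using assms subsetD[OF assms(1)]
  by (intro eq_vecI) (auto simp: index_avg sum.distrib add_divide_distrib intro!: sum.cong)

lemma avg_smult:
  assumes "H \<subseteq> Gaff" "x \<in> carrier_vec n"
  shows "avg H (c \<cdot>\<^sub>v x) = c \<cdot>\<^sub>v avg H x"
  using assms subsetD[OF assms(1)]
  by (intro eq_vecI) (auto simp: index_avg sum_distrib_left intro!: sum.cong)

lemma scalar_prod_avg:
  assumes "H \<subseteq> Gaff" "z \<in> carrier_vec n" "x \<in> carrier_vec n"
  shows "z \<bullet> avg H x = (\<Sum>h\<in>H. z \<bullet> (\<rho> h *\<^sub>v x)) / of_nat (card H)"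
proof -
  have "z \<bullet> avg H x = (\<Sum>i<n. z $ i * ((\<Sum>h\<in>H. (\<rho> h *\<^sub>v x) $ i) / of_nat (card H)))"
    using assms(2) by (auto simp: scalar_prod_def index_avg lessThan_atLeast0 intro!: sum.cong)
  also have "\<dots> = (\<Sum>h\<in>H. \<Sum>i<n. z $ i * (\<rho> h *\<^sub>v x) $ i) / of_nat (card H)"
    by (simp add: sum_distrib_left sum_divide_distrib sum.swap[of _ H])
  also have "\<dots> = (\<Sum>h\<in>H. z \<bullet> (\<rho> h *\<^sub>v x)) / of_nat (card H)"
    using assms by (auto simp: scalar_prod_def lessThan_atLeast0 intro!: sum.cong)
  finally show ?thesis .
qed

lemma avg_scalar_prod:
  assumes "H \<subseteq> Gaff" "z \<in> carrier_vec n" "x \<in> carrier_vec n"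
  shows "avg H x \<bullet> z = (\<Sum>h\<in>H. (\<rho> h *\<^sub>v x) \<bullet> z) / of_nat (card H)"
proof -
  have "avg H x \<bullet> z = z \<bullet> avg H x"
    using assms(2) by (intro comm_scalar_prod[of _ n]) auto
  also have "\<dots> = (\<Sum>h\<in>H. (\<rho> h *\<^sub>v x) \<bullet> z) / of_nat (card H)"
    using assms subsetD[OF assms(1)] by (auto simp: scalar_prod_avg intro!: sum.cong comm_scalar_prod[of _ n])
  finally show ?thesis .
qed

lemma avg_U1:
  "x \<in> carrier_vec n \<Longrightarrow> avg U1 x = (1/4) \<cdot>\<^sub>v (x + \<rho> (3, 0) *\<^sub>v x + \<rho> (5, 0) *\<^sub>v x + \<rho> (7, 0) *\<^sub>v x)"
  by (intro eq_vecI) (auto simp: index_avg U1_eq mem_Gaff_iff)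

lemma avg_U2:
  "x \<in> carrier_vec n \<Longrightarrow> avg U2 x = (1/4) \<cdot>\<^sub>v (x + \<rho> (7, 0) *\<^sub>v x + \<rho> (3, 4) *\<^sub>v x + \<rho> (5, 4) *\<^sub>v x)"
  by (intro eq_vecI) (auto simp: index_avg U2_eq mem_Gaff_iff)

lemma avg_U1_of_U2_fixed:
  assumes x: "x \<in> fixed_space n \<rho> U2"
  shows "avg U1 x = (1/4) \<cdot>\<^sub>v (x + \<rho> (1, 4) *\<^sub>v x + \<rho> (1, 4) *\<^sub>v x + x)"
    and "\<rho> (1, 1) *\<^sub>v avg U1 (\<rho> (1, 7) *\<^sub>v x) = (1/4) \<cdot>\<^sub>v (x + \<rho> (1, 2) *\<^sub>v x + x + \<rho> (1, 2) *\<^sub>v x)"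
proof -
  have xc: "x \<in> carrier_vec n" and x_fixed: "\<And>g. g \<in> U2 \<Longrightarrow> \<rho> g *\<^sub>v x = x"
    using x by (auto simp: fixed_space_def)
  have absorb: "\<rho> g *\<^sub>v x = \<rho> (gmul g h) *\<^sub>v x" if "g \<in> Gaff" "h \<in> U2" for g h
  proof -
    have "h \<in> Gaff"
      using that(2) affine_subgroup_U2 by (auto simp: affine_subgroup_def)
    then show ?thesis
      using x_fixed[OF that(2)] that(1) xc rho_rho by metis
  qed
  have "\<rho> (3, 0) *\<^sub>v x = \<rho> (1, 4) *\<^sub>v x" "\<rho> (5, 0) *\<^sub>v x = \<rho> (1, 4) *\<^sub>v x"
    "\<rho> (3, 6) *\<^sub>v x = \<rho> (1, 2) *\<^sub>v x" "\<rho> (7, 2) *\<^sub>v x = \<rho> (1, 2) *\<^sub>v x"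
    using absorb[of "(3, 0)" "(3, 4)"] absorb[of "(5, 0)" "(5, 4)"] absorb[of "(3, 6)" "(3, 4)"]
      absorb[of "(7, 2)" "(7, 0)"] by (simp_all add: U2_eq mem_Gaff_iff)
  moreover have "\<rho> (5, 4) *\<^sub>v x = x" "\<rho> (7, 0) *\<^sub>v x = x"
    using x_fixed by (simp_all add: U2_eq)
  ultimately show "avg U1 x = (1/4) \<cdot>\<^sub>v (x + \<rho> (1, 4) *\<^sub>v x + \<rho> (1, 4) *\<^sub>v x + x)"
    and "\<rho> (1, 1) *\<^sub>v avg U1 (\<rho> (1, 7) *\<^sub>v x) = (1/4) \<cdot>\<^sub>v (x + \<rho> (1, 2) *\<^sub>v x + x + \<rho> (1, 2) *\<^sub>v x)"
    using xc by (simp_all add: avg_U1 mem_Gaff_iff)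
qed

(* On a U2-fixed vector killed by averaging over U1, the central element T_{1,4} acts
   both as -1 and as the square of T_{1,2} = -1. *)
lemma fixed_U2_trivial_if_fixed_U1_trivial:
  assumes U1: "fixed_space n \<rho> U1 = {0\<^sub>v n}"
  shows "fixed_space n \<rho> U2 = {0\<^sub>v n}"
proof -
  have "x = 0\<^sub>v n" if x: "x \<in> fixed_space n \<rho> U2" for x
  proof -
    have xc: "x \<in> carrier_vec n"
      using x by (rule fixed_space_carrier)
    have avg0: "avg U1 y = 0\<^sub>v n" if "y \<in> carrier_vec n" for y
      using avg_fixed_space[OF affine_subgroup_U1 that] U1 by blast
    have "\<rho> (1, 4) *\<^sub>v x = (-1) \<cdot>\<^sub>v x"
    proof (rule eq_vecI)
      fix i assume "i < dim_vec ((-1) \<cdot>\<^sub>v x)"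
      with avg_U1_of_U2_fixed(1)[OF x] avg0[OF xc] xc show "(\<rho> (1, 4) *\<^sub>v x) $ i = ((-1) \<cdot>\<^sub>v x) $ i"
        by (auto dest!: arg_cong[where f = "\<lambda>v. v $ i"] simp: mem_Gaff_iff)
    qed (use xc in \<open>simp add: mem_Gaff_iff\<close>)
    moreover have "\<rho> (1, 2) *\<^sub>v x = (-1) \<cdot>\<^sub>v x"
    proof (rule eq_vecI)
      fix i assume "i < dim_vec ((-1) \<cdot>\<^sub>v x)"
      with avg_U1_of_U2_fixed(2)[OF x] avg0[of "\<rho> (1, 7) *\<^sub>v x"] xc
      show "(\<rho> (1, 2) *\<^sub>v x) $ i = ((-1) \<cdot>\<^sub>v x) $ i"
        by (auto dest!: arg_cong[where f = "\<lambda>v. v $ i"] simp: mem_Gaff_iff)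
    qed (use xc in \<open>simp add: mem_Gaff_iff\<close>)
    moreover have "\<rho> (1, 4) *\<^sub>v x = \<rho> (1, 2) *\<^sub>v (\<rho> (1, 2) *\<^sub>v x)"
      using xc by (simp add: mem_Gaff_iff)
    ultimately have "x = (-1) \<cdot>\<^sub>v x"
      using xc by (simp add: mem_Gaff_iff smult_smult_assoc)
    show ?thesis
    proof (rule eq_vecI)
      fix i assume "i < dim_vec (0\<^sub>v n :: rat vec)"
      with \<open>x = (-1) \<cdot>\<^sub>v x\<close> xc show "x $ i = (0\<^sub>v n :: rat vec) $ i"
        by (auto dest!: arg_cong[where f = "\<lambda>v. v $ i"])
    qed (use xc in simp)
  qed
  moreover have "0\<^sub>v n \<in> fixed_space n \<rho> U2"
    using affine_subgroup_U2 by (simp add: affine_subgroup_def zero_fixed_space)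
  ultimately show ?thesis
    by blast
qed

section \<open>Hecke operators on the U1-fixed vectors\<close>

definition shift :: "nat \<Rightarrow> rat vec \<Rightarrow> rat vec" where
  "shift b x = \<rho> (1, b mod 8) *\<^sub>v x"

lemma shift_carrier [simp]: "x \<in> carrier_vec n \<Longrightarrow> shift b x \<in> carrier_vec n"
  by (simp add: shift_def mem_Gaff_iff)

lemma dim_shift [simp]: "x \<in> carrier_vec n \<Longrightarrow> dim_vec (shift b x) = n"
  using shift_carrier carrier_vecD by blast

lemma shift_mod: "shift (b mod 8) x = shift b x"
  by (simp add: shift_def)

lemma shift_cong: "a mod 8 = b mod 8 \<Longrightarrow> shift a x = shift b x"
  by (simp add: shift_def)

lemma shift_0 [simp]: "x \<in> carrier_vec n \<Longrightarrow> shift 0 x = x"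
  by (simp add: shift_def)

lemma shift_add [simp]:
  "x \<in> carrier_vec n \<Longrightarrow> y \<in> carrier_vec n \<Longrightarrow> shift b (x + y) = shift b x + shift b y"
  by (simp add: shift_def mem_Gaff_iff)

lemma shift_smult [simp]: "x \<in> carrier_vec n \<Longrightarrow> shift b (c \<cdot>\<^sub>v x) = c \<cdot>\<^sub>v shift b x"
  by (simp add: shift_def mem_Gaff_iff)

lemma rho_shift_U1_fixed:
  assumes v: "v \<in> fixed_space n \<rho> U1" and g: "(a, c) \<in> Gaff"
  shows "\<rho> (a, c) *\<^sub>v shift b v = shift (a * b + c) v"
proof -
  have vc: "v \<in> carrier_vec n" and a: "a \<in> {1, 3, 5, 7}" and fixed: "\<rho> (a, 0) *\<^sub>v v = v"
    using v g by (auto simp: fixed_space_def U1_eq mem_Gaff_iff)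
  have "(a * (b mod 8) + c) mod 8 = (a * b + c) mod 8"
    by (metis mod_add_left_eq mod_mult_right_eq)
  then have "gmul (a, c) (1, b mod 8) = gmul (1, (a * b + c) mod 8) (a, 0)"
    using a by auto
  then have "\<rho> (a, c) *\<^sub>v shift b v = \<rho> (1, (a * b + c) mod 8) *\<^sub>v (\<rho> (a, 0) *\<^sub>v v)"
    using g a vc by (simp add: shift_def mem_Gaff_iff)
  then show ?thesis
    by (simp add: fixed shift_def)
qed

lemma shift_shift: "x \<in> carrier_vec n \<Longrightarrow> shift a (shift b x) = shift (a + b) x"
  by (simp add: shift_def mem_Gaff_iff mod_add_eq add.commute)

definition hecke :: "nat \<Rightarrow> rat vec \<Rightarrow> rat vec" where
  "hecke a x = avg U1 (shift a x)"

lemma hecke_mod: "hecke (a mod 8) x = hecke a x"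
  by (simp add: hecke_def shift_mod)

lemma hecke_add:
  "x \<in> carrier_vec n \<Longrightarrow> y \<in> carrier_vec n \<Longrightarrow> hecke a (x + y) = hecke a x + hecke a y"
  using affine_subgroup_U1 by (simp add: hecke_def avg_add affine_subgroup_def)

lemma hecke_smult: "x \<in> carrier_vec n \<Longrightarrow> hecke a (c \<cdot>\<^sub>v x) = c \<cdot>\<^sub>v hecke a x"
  using affine_subgroup_U1 by (simp add: hecke_def avg_smult affine_subgroup_def)

end

datatype sph_type = Triv | Sign | Two | Ind

(* The spherical function k |-> <w, T_{1,k} w> / <w, w> of a U1-fixed Hecke eigenvector w,
   for the four irreducible representations with U1-fixed vectors: the trivial one, the
   sign T_{a,b} |-> (-1)^b, a 2-dimensional one, and I.  sph_deg is their dimension. *)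
fun sph :: "sph_type \<Rightarrow> nat \<Rightarrow> rat" where
  "sph Triv k = 1"
| "sph Sign k = (if even k then 1 else -1)"
| "sph Two k = (if k mod 4 = 0 then 1 else if k mod 4 = 2 then -1 else 0)"
| "sph Ind k = (if k mod 8 = 0 then 1 else if k mod 8 = 4 then -1 else 0)"

fun sph_deg :: "sph_type \<Rightarrow> rat" where
  "sph_deg Triv = 1"
| "sph_deg Sign = 1"
| "sph_deg Two = 2"
| "sph_deg Ind = 4"

lemma sph_mod: "sph s (k mod 8) = sph s k"
proof -
  have "even (k mod 8) \<longleftrightarrow> even k"
    by presburger
  then show ?thesis
    by (cases s) (simp_all add: mod_mod_cancel)
qed

definition sph2 :: "sph_type \<Rightarrow> nat \<Rightarrow> nat \<Rightarrow> rat" where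
  "sph2 s a b = (1/4) * (sph s (b + 7 * a) + sph s (7 * b + 7 * a) + sph s (3 * b + 4 + 7 * a)
     + sph s (5 * b + 4 + 7 * a))"

lemma sph2_mod: "sph2 s a b = sph2 s (a mod 8) (b mod 8)"
proof -
  have cong: "sph s k = sph s k'" if "k mod 8 = k' mod 8" for k k'
    by (metis that sph_mod)
  show ?thesis
    unfolding sph2_def
    using mod_linear_cong[of 1 b 7 a 0 8] mod_linear_cong[of 7 b 7 a 0 8]
      mod_linear_cong[of 3 b 7 a 4 8] mod_linear_cong[of 5 b 7 a 4 8]
    by (intro arg_cong2[where f = "(*)"] refl arg_cong2[where f = "(+)"] cong; simp add: ac_simps)
qed

definition sph2_base :: "sph_type \<Rightarrow> nat" where
  "sph2_base s = (if s = Ind then 1 else 0)"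

lemma sph2_base_value: "sph2 s (sph2_base s) (sph2_base s) = (if s = Ind then 1/2 else 1)"
  by (cases s) (simp_all add: sph2_def sph2_base_def)

lemma sph2_rank_one:
  "sph2 s a b * sph2 s (sph2_base s) (sph2_base s) = sph2 s (sph2_base s) b * sph2 s a (sph2_base s)"
proof -
  have "\<forall>a<8. \<forall>b<8.
      sph2 s a b * sph2 s (sph2_base s) (sph2_base s) = sph2 s (sph2_base s) b * sph2 s a (sph2_base s)"
    by (cases s; simp only: all_less_8_iff; simp add: sph2_def sph2_base_def)
  moreover have "sph2_base s mod 8 = sph2_base s"
    by (simp add: sph2_base_def)
  ultimately show ?thesis
    using sph2_mod[of s a b] sph2_mod[of s "sph2_base s" b] sph2_mod[of s a "sph2_base s"]
    by (metis mod_less_divisor zero_less_numeral)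
qed

locale U1_vector = affine_rep +
  fixes v :: "rat vec"
  assumes v_fixed: "v \<in> fixed_space n \<rho> U1"
begin

lemma v_carrier [simp]: "v \<in> carrier_vec n"
  using v_fixed by (rule fixed_space_carrier)

definition hv :: "nat \<Rightarrow> rat vec" where
  "hv c = hecke c v"

lemma hv_carrier [simp]: "hv c \<in> carrier_vec n"
  by (simp add: hv_def hecke_def)

lemma dim_hv [simp]: "dim_vec (hv c) = n"
  by (simp add: hv_def hecke_def)

lemma hv_fixed: "hv c \<in> fixed_space n \<rho> U1"
  by (simp add: hv_def hecke_def avg_fixed_space affine_subgroup_U1)

lemma hv_0: "hv 0 = v"
  using avg_eq_self[OF affine_subgroup_U1 v_fixed] by (simp add: hv_def hecke_def shift_def)

lemma hv_unit: assumes "u \<in> units8" shows "hv (u * c) = hv c"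
proof -
  have u: "(u, 0) \<in> U1" "(u, 0) \<in> Gaff"
    using assms by (auto simp: U1_eq units8_eq mem_Gaff_iff)
  have "shift (u * c) v = \<rho> (u, 0) *\<^sub>v shift c v"
    using rho_shift_U1_fixed[OF v_fixed u(2)] by simp
  then show ?thesis
    by (simp add: hv_def hecke_def avg_rho_subgroup[OF affine_subgroup_U1 u(1)])
qed

lemma hv_classes:
  "hv k = (if k mod 8 = 0 then hv 0 else if k mod 8 = 4 then hv 4
     else if even k then hv 2 else hv 1)"
proof -
  have "hv k = hv (k mod 8)"
    by (simp add: hv_def hecke_mod)
  moreover have "hv 6 = hv 2" "hv 3 = hv 1" "hv 5 = hv 1" "hv 7 = hv 1"
    using hv_unit[of 3 2] hv_unit[of 3 1] hv_unit[of 5 1] hv_unit[of 7 1] by (simp_all add: units8_eq)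
  moreover have "k mod 8 \<in> {0, 1, 2, 3, 4, 5, 6, 7}" "even k \<longleftrightarrow> even (k mod 8)"
    by auto presburger+
  ultimately show ?thesis
    by auto
qed

lemma hecke_hv: "hecke a (hv b) = (1/4) \<cdot>\<^sub>v (hv (a + b) + hv (a + 3 * b) + hv (a + 5 * b) + hv (a + 7 * b))"
proof -
  have "\<rho> (u, 0) *\<^sub>v shift b v = shift (u * b) v" if "u \<in> {3, 5, 7}" for u
    using rho_shift_U1_fixed[OF v_fixed, of u 0 b] that by (auto simp: mem_Gaff_iff)
  then have "hv b = (1/4) \<cdot>\<^sub>v (shift b v + shift (3 * b) v + shift (5 * b) v + shift (7 * b) v)"
    by (simp add: hv_def hecke_def avg_U1)
  then have "shift a (hv b) = (1/4) \<cdot>\<^sub>v (shift (a + b) v + shift (a + 3 * b) v + shift (a + 5 * b) v + shift (a + 7 * b) v)"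
    by (simp add: shift_shift)
  then show ?thesis
    using affine_subgroup_U1 by (simp add: hecke_def hv_def avg_add avg_smult affine_subgroup_def)
qed

definition hcomb :: "rat \<Rightarrow> rat \<Rightarrow> rat \<Rightarrow> rat \<Rightarrow> rat vec" where
  "hcomb p q r t = p \<cdot>\<^sub>v hv 0 + q \<cdot>\<^sub>v hv 4 + r \<cdot>\<^sub>v hv 2 + t \<cdot>\<^sub>v hv 1"
lemma hcomb_add: "hcomb p q r t + hcomb p' q' r' t' = hcomb (p + p') (q + q') (r + r') (t + t')"
  by (intro eq_vecI) (simp_all add: hcomb_def algebra_simps)

lemma hcomb_smult: "c \<cdot>\<^sub>v hcomb p q r t = hcomb (c * p) (c * q) (c * r) (c * t)"
  by (intro eq_vecI) (simp_all add: hcomb_def algebra_simps)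

lemma hv_hcomb: "hv k = hcomb (of_bool (k mod 8 = 0)) (of_bool (k mod 8 = 4))
  (of_bool (k mod 8 \<noteq> 0 \<and> k mod 8 \<noteq> 4 \<and> even k)) (of_bool (odd k))"
proof -
  have "odd k \<Longrightarrow> k mod 8 \<noteq> 0 \<and> k mod 8 \<noteq> 4"
    by presburger
  then show ?thesis
    by (subst hv_classes) (intro eq_vecI; auto simp: hcomb_def)
qed

lemma hecke_hcomb: "hecke a (hcomb p q r t) =
  p \<cdot>\<^sub>v hecke a (hv 0) + q \<cdot>\<^sub>v hecke a (hv 4) + r \<cdot>\<^sub>v hecke a (hv 2) + t \<cdot>\<^sub>v hecke a (hv 1)"
  by (simp add: hcomb_def hecke_add hecke_smult)

(* The projection of v onto the Hecke eigenspace with spherical function sph s: it is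
   (sph_deg s / 8) * sum_{c<8} sph s c * hv c, grouped by the classes {0}, {4}, {2, 6}, odd. *)
definition sph_proj :: "sph_type \<Rightarrow> rat vec" where
  "sph_proj s = hcomb (sph_deg s / 8 * sph s 0) (sph_deg s / 8 * sph s 4)
     (sph_deg s / 8 * 2 * sph s 2) (sph_deg s / 8 * 4 * sph s 1)"

lemma hecke_sph_proj: "hecke a (sph_proj s) = sph s a \<cdot>\<^sub>v sph_proj s"
proof -
  have "hecke r (sph_proj s) = sph s r \<cdot>\<^sub>v sph_proj s" if "r < 8" for r
  proof -
    have "r = 0 \<or> r = 1 \<or> r = 2 \<or> r = 3 \<or> r = 4 \<or> r = 5 \<or> r = 6 \<or> r = 7"
      using that by presburger
    then show ?thesis
      by (cases s; elim disjE; simp only: sph_proj_def hecke_hcomb; simp only: hecke_hv;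
          simp only: hv_hcomb hcomb_add hcomb_smult; simp)
  qed
  then show ?thesis
    using hecke_mod[of a] sph_mod[of s a] by (metis mod_less_divisor zero_less_numeral)
qed

lemma sum_sph_proj: "sph_proj Triv + sph_proj Sign + sph_proj Two + sph_proj Ind = v"
proof -
  have "hcomb 1 0 0 0 = v"
    by (intro eq_vecI) (auto simp: hcomb_def hv_0 carrier_vecD[OF v_carrier])
  then show ?thesis
    by (simp add: sph_proj_def hcomb_add)
qed

lemma sph_proj_fixed: "sph_proj s \<in> fixed_space n \<rho> U1"
  using affine_subgroup_U1 hv_fixed
  by (simp add: sph_proj_def hcomb_def fixed_space_add fixed_space_smult affine_subgroup_def)

end

lemma (in affine_rep) hecke_eigenvector_exists:
  assumes "v \<in> fixed_space n \<rho> U1" "v \<noteq> 0\<^sub>v n"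
  obtains w s where "w \<in> fixed_space n \<rho> U1" "w \<noteq> 0\<^sub>v n" "\<And>a. hecke a w = sph s a \<cdot>\<^sub>v w"
proof -
  interpret U1_vector n \<rho> v
    using assms(1) by unfold_locales
  have "\<exists>s. sph_proj s \<noteq> 0\<^sub>v n"
    using sum_sph_proj assms(2) by force
  then show ?thesis
    using that sph_proj_fixed hecke_sph_proj by blast
qed

section \<open>Representations isomorphic to I\<close>

lemma I_rep_carrier [simp]: "I_rep g \<in> carrier_mat 4 4"
  by (cases g) simp

lemma dim_I_rep [simp]: "dim_row (I_rep g) = 4" "dim_col (I_rep g) = 4"
  by (cases g; simp)+

lemma I_rep_central: "I_rep (1, 4) = - 1\<^sub>m 4"
proof (rule eq_matI)
  fix i j assume "i < dim_row (- 1\<^sub>m 4 :: rat mat)" "j < dim_col (- 1\<^sub>m 4 :: rat mat)"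
  then have "i < 4" "j < 4" and "(4 + j) mod 8 = 4 + j"
    by auto
  then show "I_rep (1, 4) $$ (i, j) = (- 1\<^sub>m 4 :: rat mat) $$ (i, j)"
    by (simp add: zeta_coord_def)
qed auto

lemma I_rep_fixes_e0: "a < 8 \<Longrightarrow> I_rep (a, 0) *\<^sub>v unit_vec 4 0 = unit_vec 4 0"
  by (simp add: mult_unit_vec_eq_col) (intro eq_vecI; simp add: zeta_coord_def)

context affine_rep
begin

lemma iso_to_I_conj:
  assumes "iso_to_I n \<rho>"
  obtains P P' where "n = 4" "P \<in> carrier_mat 4 4" "P' \<in> carrier_mat 4 4"
    "P * P' = 1\<^sub>m 4" "P' * P = 1\<^sub>m 4" "\<And>g. g \<in> Gaff \<Longrightarrow> \<rho> g = P' * I_rep g * P"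
proof -
  obtain P where n: "n = 4" and P: "P \<in> carrier_mat 4 4" and inv: "invertible_mat P"
    and intertw: "\<And>g. g \<in> Gaff \<Longrightarrow> P * \<rho> g = I_rep g * P"
    using assms unfolding iso_to_I_def by blast
  obtain P' where P': "P' \<in> carrier_mat 4 4" "P * P' = 1\<^sub>m 4" "P' * P = 1\<^sub>m 4"
    using invertible_mat_obtain_inverse[OF P inv] by blast
  have "\<rho> g = P' * I_rep g * P" if g: "g \<in> Gaff" for g
  proof -
    have rho: "\<rho> g \<in> carrier_mat 4 4"
      using rho_carrier[OF g] n by simp
    have "\<rho> g = (P' * P) * \<rho> g"
      using P' rho by simp
    also have "\<dots> = P' * (P * \<rho> g)"
      by (rule assoc_mult_mat) (use P P' rho in auto)
    also have "\<dots> = P' * I_rep g * P"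
      using P P' by (simp add: intertw[OF g] assoc_mult_mat[of _ 4 4 _ 4 _ 4])
    finally show ?thesis .
  qed
  with n P P' show ?thesis
    using that by blast
qed

lemma iso_to_I_if_conj:
  assumes S: "S \<in> carrier_mat n 4" and C: "C \<in> carrier_mat 4 n"
    and CS: "C * S = 1\<^sub>m 4" and SC: "S * C = 1\<^sub>m n"
    and conj: "\<And>g. g \<in> Gaff \<Longrightarrow> \<rho> g * S = S * I_rep g" and n: "n = 4"
  shows "iso_to_I n \<rho>"
proof -
  have "C * \<rho> g = I_rep g * C" if g: "g \<in> Gaff" for g
  proof -
    have rho: "\<rho> g \<in> carrier_mat n n"
      using g by simp
    have "C * \<rho> g = C * \<rho> g * (S * C)"
      using C rho by (simp add: SC)
    also have "\<dots> = C * \<rho> g * S * C"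
      by (rule assoc_mult_mat[symmetric]) (use C rho S in auto)
    also have "\<dots> = C * (\<rho> g * S) * C"
      using assoc_mult_mat[OF C rho S] by simp
    also have "\<dots> = (C * S) * I_rep g * C"
      using C S by (simp add: conj[OF g] assoc_mult_mat[of _ 4 n _ 4 _ 4])
    also have "\<dots> = I_rep g * C"
      using C by (simp add: CS)
    finally show ?thesis .
  qed
  moreover have "invertible_mat C"
    using C S CS SC n by (auto simp: invertible_mat_def inverts_mat_def square_mat.simps)
  ultimately show ?thesis
    unfolding iso_to_I_def using C n by blast
qed

lemma iso_to_I_rho_central:
  assumes "iso_to_I n \<rho>"
  shows "\<rho> (1, 4) = - 1\<^sub>m n"
proof -
  obtain P P' where n: "n = 4" and P: "P \<in> carrier_mat 4 4" "P' \<in> carrier_mat 4 4" "P' * P = 1\<^sub>m 4"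
    and conj: "\<And>g. g \<in> Gaff \<Longrightarrow> \<rho> g = P' * I_rep g * P"
    using iso_to_I_conj[OF assms] by metis
  have "\<rho> (1, 4) = P' * (- 1\<^sub>m 4) * P"
    using conj[of "(1, 4)"] by (simp add: mem_Gaff_iff I_rep_central del: I_rep.simps)
  also have "\<dots> = - 1\<^sub>m 4"
    using P by simp
  finally show ?thesis
    using n by simp
qed

lemma iso_to_I_fixed_U1:
  assumes "iso_to_I n \<rho>"
  shows "fixed_space n \<rho> U1 \<noteq> {0\<^sub>v n}"
proof -
  obtain P P' where n: "n = 4" and P: "P \<in> carrier_mat 4 4" "P' \<in> carrier_mat 4 4" "P * P' = 1\<^sub>m 4"
    and conj: "\<And>g. g \<in> Gaff \<Longrightarrow> \<rho> g = P' * I_rep g * P"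
    using iso_to_I_conj[OF assms] by metis
  define x where "x = P' *\<^sub>v unit_vec 4 0"
  have x: "x \<in> carrier_vec 4" and Px: "P *\<^sub>v x = unit_vec 4 0"
    using P by (simp_all add: x_def assoc_mult_mat_vec[of _ 4 4 _ 4, symmetric])
  have "\<rho> g *\<^sub>v x = x" if gU1: "g \<in> U1" for g
  proof -
    obtain a where g: "g = (a, 0)" "a < 8"
      using gU1 by (auto simp: U1_eq)
    have "g \<in> Gaff"
      using gU1 by (auto simp: U1_eq mem_Gaff_iff)
    have "\<rho> g = P' * I_rep (a, 0) * P"
      using conj[OF \<open>g \<in> Gaff\<close>] g(1) by (simp del: I_rep.simps)
    then have "\<rho> g *\<^sub>v x = P' *\<^sub>v (I_rep (a, 0) *\<^sub>v (P *\<^sub>v x))"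
      using P x by (simp add: assoc_mult_mat_vec[of _ 4 4 _ 4] del: I_rep.simps)
    also have "\<dots> = P' *\<^sub>v unit_vec 4 0"
      by (simp only: Px I_rep_fixes_e0[OF g(2)])
    finally show ?thesis
      by (simp only: x_def)
  qed
  then have "x \<in> fixed_space n \<rho> U1"
    using x n by (simp add: fixed_space_def)
  moreover have "x \<noteq> 0\<^sub>v n"
  proof
    assume "x = 0\<^sub>v n"
    then have "P *\<^sub>v x = 0\<^sub>v 4"
      using P n by (intro eq_vecI) auto
    then show False
      using Px by simp
  qed
  ultimately show ?thesis
    by blast
qed

end

section \<open>The invariant pairing\<close>

locale irrep_form = affine_rep +
  fixes B :: "rat mat"
  assumes irreducible: "irreducible_rep n \<rho>" and pairing: "invariant_pairing n \<rho> B"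
begin

lemma B_carrier [simp]: "B \<in> carrier_mat n n"
  using pairing by (simp add: invariant_pairing_def)

lemma dim_B [simp]: "dim_row B = n" "dim_col B = n"
  using B_carrier by blast+

lemma B_mult_carrier [simp]: "y \<in> carrier_vec n \<Longrightarrow> B *\<^sub>v y \<in> carrier_vec n"
  using B_carrier mult_mat_vec_carrier by blast

definition form :: "rat vec \<Rightarrow> rat vec \<Rightarrow> rat" where
  "form x y = x \<bullet> (B *\<^sub>v y)"

lemma form_add_left:
  "x \<in> carrier_vec n \<Longrightarrow> y \<in> carrier_vec n \<Longrightarrow> z \<in> carrier_vec n \<Longrightarrow> form (x + y) z = form x z + form y z"
  by (simp add: form_def add_scalar_prod_distrib[of _ n])

lemma form_add_right:
  "x \<in> carrier_vec n \<Longrightarrow> y \<in> carrier_vec n \<Longrightarrow> z \<in> carrier_vec n \<Longrightarrow> form x (y + z) = form x y + form x z"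
  by (simp add: form_def mult_add_distrib_mat_vec[OF B_carrier] scalar_prod_add_distrib[of _ n])

lemma form_smult_left [simp]:
  "x \<in> carrier_vec n \<Longrightarrow> y \<in> carrier_vec n \<Longrightarrow> form (c \<cdot>\<^sub>v x) y = c * form x y"
  by (simp add: form_def)

lemma form_smult_right [simp]:
  "x \<in> carrier_vec n \<Longrightarrow> y \<in> carrier_vec n \<Longrightarrow> form x (c \<cdot>\<^sub>v y) = c * form x y"
  by (simp add: form_def mult_mat_vec[OF B_carrier])

lemma form_zero_left [simp]: "y \<in> carrier_vec n \<Longrightarrow> form (0\<^sub>v n) y = 0"
  by (simp add: form_def)

lemma form_rho:
  assumes g: "g \<in> Gaff" and x: "x \<in> carrier_vec n" and y: "y \<in> carrier_vec n"
  shows "form (\<rho> g *\<^sub>v x) (\<rho> g *\<^sub>v y) = form x y"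
proof -
  have "form (\<rho> g *\<^sub>v x) (\<rho> g *\<^sub>v y) = (transpose_mat (\<rho> g) *\<^sub>v (B *\<^sub>v (\<rho> g *\<^sub>v y))) \<bullet> x"
    unfolding form_def using g x y
    by (simp add: transpose_vec_mult_scalar[of "\<rho> g" n n] comm_scalar_prod[of _ n])
  also have "transpose_mat (\<rho> g) *\<^sub>v (B *\<^sub>v (\<rho> g *\<^sub>v y)) = (transpose_mat (\<rho> g) * B * \<rho> g) *\<^sub>v y"
    using rho_carrier[OF g] y by (simp add: assoc_mult_mat_vec[of _ n n _ n])
  also have "transpose_mat (\<rho> g) * B * \<rho> g = B"
    using pairing g by (simp add: invariant_pairing_def)
  finally show ?thesis
    unfolding form_def using x y by (simp add: comm_scalar_prod[of _ n])
qed

lemma form_nondegenerate: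
  assumes z: "z \<in> carrier_vec n" and orth: "\<And>x. x \<in> carrier_vec n \<Longrightarrow> form x z = 0"
  shows "z = 0\<^sub>v n"
proof -
  have "B *\<^sub>v z = 0\<^sub>v n"
  proof (rule eq_vecI)
    fix i assume i: "i < dim_vec (0\<^sub>v n :: rat vec)"
    then have "(B *\<^sub>v z) $ i = form (unit_vec n i) z"
      using z by (simp add: form_def)
    also have "\<dots> = 0"
      by (rule orth) simp
    finally show "(B *\<^sub>v z) $ i = (0\<^sub>v n :: rat vec) $ i"
      using i by simp
  qed simp
  then show ?thesis
    using det_0_iff_vec_prod_zero[OF B_carrier] pairing z by (auto simp: invariant_pairing_def)
qed

(* The vectors whose whole orbit is orthogonal to z form an invariant subspace. *)
lemma orbit_orthogonal_imp_zero:
  assumes w: "w \<in> carrier_vec n" "w \<noteq> 0\<^sub>v n" and z: "z \<in> carrier_vec n"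
    and orth: "\<And>g. g \<in> Gaff \<Longrightarrow> form (\<rho> g *\<^sub>v w) z = 0"
  shows "z = 0\<^sub>v n"
proof -
  define W where "W = {x \<in> carrier_vec n. \<forall>g\<in>Gaff. form (\<rho> g *\<^sub>v x) z = 0}"
  have "is_subspace n W"
    unfolding is_subspace_def W_def using z by (auto simp: form_add_left)
  moreover have "\<forall>g\<in>Gaff. \<forall>x\<in>W. \<rho> g *\<^sub>v x \<in> W"
    unfolding W_def using gmul_Gaff by auto
  ultimately have "W = {0\<^sub>v n} \<or> W = carrier_vec n"
    using irreducible unfolding irreducible_rep_def by blast
  moreover have "w \<in> W"
    using w orth by (simp add: W_def)
  ultimately have "W = carrier_vec n"
    using w by auto
  have "form x z = 0" if "x \<in> carrier_vec n" for x
  proof -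
    have "\<forall>g\<in>Gaff. form (\<rho> g *\<^sub>v x) z = 0"
      using that \<open>W = carrier_vec n\<close> by (auto simp: W_def)
    then have "form (\<rho> (1, 0) *\<^sub>v x) z = 0"
      by (rule bspec) (simp add: mem_Gaff_iff)
    then show ?thesis
      using that by simp
  qed
  then show ?thesis
    by (rule form_nondegenerate[OF z])
qed

lemma form_avg_left:
  "H \<subseteq> Gaff \<Longrightarrow> x \<in> carrier_vec n \<Longrightarrow> y \<in> carrier_vec n \<Longrightarrow>
    form (avg H x) y = (\<Sum>h\<in>H. form (\<rho> h *\<^sub>v x) y) / of_nat (card H)"
  by (simp add: form_def avg_scalar_prod)

lemma form_avg_right:
  assumes "H \<subseteq> Gaff" "x \<in> carrier_vec n" "y \<in> carrier_vec n"
  shows "form x (avg H y) = (\<Sum>h\<in>H. form x (\<rho> h *\<^sub>v y)) / of_nat (card H)"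
proof -
  have form_eq: "form x z = (transpose_mat B *\<^sub>v x) \<bullet> z" if "z \<in> carrier_vec n" for z
    unfolding form_def using assms that by (simp add: transpose_vec_mult_scalar[of B n n])
  have "transpose_mat B *\<^sub>v x \<in> carrier_vec n"
    by (simp add: carrier_vecI)
  then show ?thesis
    using assms subsetD[OF assms(1)] by (simp add: form_eq scalar_prod_avg)
qed

lemma form_avg_fixed_left:
  assumes H: "affine_subgroup H" and y: "y \<in> fixed_space n \<rho> H" and x: "x \<in> carrier_vec n"
  shows "form (avg H x) y = form x y"
proof -
  have sub: "H \<subseteq> Gaff" and yc: "y \<in> carrier_vec n"
    using H y by (auto simp: affine_subgroup_def fixed_space_def)
  have "form (\<rho> h *\<^sub>v x) y = form x y" if "h \<in> H" for h
    using form_rho[of h x y] that sub x yc y by (auto simp: fixed_space_def)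
  then show ?thesis
    using affine_subgroup_card_pos[OF H] by (simp add: form_avg_left[OF sub x yc])
qed

lemma form_avg_fixed_right:
  assumes H: "affine_subgroup H" and y: "y \<in> fixed_space n \<rho> H" and x: "x \<in> carrier_vec n"
  shows "form y (avg H x) = form y x"
proof -
  have sub: "H \<subseteq> Gaff" and yc: "y \<in> carrier_vec n"
    using H y by (auto simp: affine_subgroup_def fixed_space_def)
  have "form y (\<rho> h *\<^sub>v x) = form y x" if "h \<in> H" for h
    using form_rho[of h y x] that sub x yc y by (auto simp: fixed_space_def)
  then show ?thesis
    using affine_subgroup_card_pos[OF H] by (simp add: form_avg_right[OF sub yc x])
qed

lemma fixed_space_eq_line:
  assumes H: "affine_subgroup H" and w: "w \<in> carrier_vec n" "w \<noteq> 0\<^sub>v n"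
    and y: "y \<in> fixed_space n \<rho> H" "form y y \<noteq> 0"
    and onto_line: "\<And>g. g \<in> Gaff \<Longrightarrow> \<exists>s. avg H (\<rho> g *\<^sub>v w) = s \<cdot>\<^sub>v y"
  shows "fixed_space n \<rho> H = {t \<cdot>\<^sub>v y | t. True}"
proof
  have sub: "H \<subseteq> Gaff" and yc: "y \<in> carrier_vec n"
    using H y by (auto simp: affine_subgroup_def fixed_space_def)
  show "{t \<cdot>\<^sub>v y | t. True} \<subseteq> fixed_space n \<rho> H"
    using y(1) sub fixed_space_smult by auto
  show "fixed_space n \<rho> H \<subseteq> {t \<cdot>\<^sub>v y | t. True}"
  proof
    fix x assume x: "x \<in> fixed_space n \<rho> H"
    then have xc: "x \<in> carrier_vec n"
      by (rule fixed_space_carrier)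
    define t where "t = form y x / form y y"
    have "x + (- t) \<cdot>\<^sub>v y = 0\<^sub>v n"
    proof (rule orbit_orthogonal_imp_zero[OF w])
      fix g assume g: "g \<in> Gaff"
      obtain s where s: "avg H (\<rho> g *\<^sub>v w) = s \<cdot>\<^sub>v y"
        using onto_line[OF g] by blast
      have "form (\<rho> g *\<^sub>v w) u = s * form y u" if "u \<in> fixed_space n \<rho> H" for u
        using form_avg_fixed_left[OF H that, of "\<rho> g *\<^sub>v w"] g w yc fixed_space_carrier[OF that]
        by (simp add: s)
      then show "form (\<rho> g *\<^sub>v w) (x + (- t) \<cdot>\<^sub>v y) = 0"
        using x y g w xc yc by (simp add: form_add_right t_def)
    qed (use xc yc in simp)
    have "x = t \<cdot>\<^sub>v y"
    proof (rule eq_vecI)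
      fix i assume "i < dim_vec (t \<cdot>\<^sub>v y)"
      with \<open>x + (- t) \<cdot>\<^sub>v y = 0\<^sub>v n\<close> xc yc show "x $ i = (t \<cdot>\<^sub>v y) $ i"
        by (auto dest!: arg_cong[where f = "\<lambda>v. v $ i"])
    qed (use xc yc in simp)
    then show "x \<in> {t \<cdot>\<^sub>v y | t. True}"
      by blast
  qed
qed

lemma regulator_constant_no_U1_fixed:
  assumes "fixed_space n \<rho> U1 = {0\<^sub>v n}"
    and "basis_mat n (fixed_space n \<rho> U1) k1 M1" "basis_mat n (fixed_space n \<rho> U2) k2 M2"
  shows "sq_class_eq (pairing_det U1 B M1 / pairing_det U2 B M2) (if iso_to_I n \<rho> then 2 else 1)"
proof -
  have "pairing_det U1 B M1 = 1" "pairing_det U2 B M2 = 1"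
    using assms fixed_U2_trivial_if_fixed_U1_trivial pairing_det_zero_space by simp_all
  moreover have "\<not> iso_to_I n \<rho>"
    using iso_to_I_fixed_U1 assms(1) by blast
  ultimately show ?thesis
    unfolding sq_class_eq_def by (intro exI[of _ 1]) simp
qed

end

section \<open>Representations with a spherical vector\<close>

locale spherical_vector = irrep_form +
  fixes w :: "rat vec" and s :: sph_type
  assumes w_fixed: "w \<in> fixed_space n \<rho> U1" and w_nonzero: "w \<noteq> 0\<^sub>v n"
    and w_eigen: "\<And>a. hecke a w = sph s a \<cdot>\<^sub>v w"
begin

lemma w_carrier [simp]: "w \<in> carrier_vec n"
  using w_fixed by (rule fixed_space_carrier)

lemma dim_w [simp]: "dim_vec w = n"
  using w_carrier by (rule carrier_vecD)

lemma rho_w: "(a, c) \<in> Gaff \<Longrightarrow> \<rho> (a, c) *\<^sub>v w = shift c w"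
  using rho_shift_U1_fixed[OF w_fixed, of a c 0] by (simp add: shift_def)

lemma avg_U1_shift: "avg U1 (shift a w) = sph s a \<cdot>\<^sub>v w"
  using w_eigen by (simp add: hecke_def)

lemma form_shift_shift: "form (shift a w) (shift b w) = sph s (b + 7 * a) * form w w"
proof -
  have g: "(1, 7 * a mod 8) \<in> Gaff"
    by (simp add: mem_Gaff_iff)
  have "form (shift a w) (shift b w) = form (shift (a + 7 * a mod 8) w) (shift (b + 7 * a mod 8) w)"
    using form_rho[OF g, of "shift a w" "shift b w"] by (simp add: rho_shift_U1_fixed[OF w_fixed g])
  also have "shift (a + 7 * a mod 8) w = w"
    by (subst shift_cong[of _ 0]) (simp_all add: mod_add_right_eq)
  also have "shift (b + 7 * a mod 8) w = shift (b + 7 * a) w"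
    by (rule shift_cong) (simp add: mod_add_right_eq)
  also have "form w (shift (b + 7 * a) w) = form w (avg U1 (shift (b + 7 * a) w))"
    using form_avg_fixed_right[OF affine_subgroup_U1 w_fixed] by simp
  finally show ?thesis
    by (simp add: avg_U1_shift)
qed

lemma form_w_nonzero: "form w w \<noteq> 0"
proof
  assume "form w w = 0"
  then have "form (\<rho> g *\<^sub>v w) w = 0" if "g \<in> Gaff" for g
    using that form_shift_shift[of _ 0] by (cases g) (simp add: rho_w shift_def)
  then show False
    using orbit_orthogonal_imp_zero[OF w_carrier w_nonzero w_carrier] w_nonzero by blast
qed

lemma fixed_U1_line: "fixed_space n \<rho> U1 = {t \<cdot>\<^sub>v w | t. True}"
proof (rule fixed_space_eq_line[OF affine_subgroup_U1 w_carrier w_nonzero w_fixed form_w_nonzero])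
  fix g assume "g \<in> Gaff"
  then show "\<exists>t. avg U1 (\<rho> g *\<^sub>v w) = t \<cdot>\<^sub>v w"
    by (cases g) (auto simp: rho_w avg_U1_shift)
qed

lemma form_shift_avg_U2: "form (shift a w) (avg U2 (shift b w)) = sph2 s a b * form w w"
proof -
  have "avg U2 (shift b w) = (1/4) \<cdot>\<^sub>v (shift b w + shift (7 * b) w + shift (3 * b + 4) w + shift (5 * b + 4) w)"
    by (simp add: avg_U2 rho_shift_U1_fixed[OF w_fixed] mem_Gaff_iff)
  then show ?thesis
    by (simp add: form_add_right form_shift_shift sph2_def algebra_simps)
qed

definition w2 :: "rat vec" where
  "w2 = avg U2 (shift (sph2_base s) w)"

lemma w2_fixed: "w2 \<in> fixed_space n \<rho> U2"
  by (simp add: w2_def avg_fixed_space affine_subgroup_U2)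

lemma w2_carrier [simp]: "w2 \<in> carrier_vec n"
  by (simp add: w2_def)

lemma dim_w2 [simp]: "dim_vec w2 = n"
  by (simp add: w2_def)

lemma form_w2_w2: "form w2 w2 = sph2 s (sph2_base s) (sph2_base s) * form w w"
proof -
  have "form w2 w2 = form (shift (sph2_base s) w) w2"
    using form_avg_fixed_left[OF affine_subgroup_U2 w2_fixed, of "shift (sph2_base s) w"]
    by (simp add: w2_def)
  also have "\<dots> = sph2 s (sph2_base s) (sph2_base s) * form w w"
    unfolding w2_def by (rule form_shift_avg_U2)
  finally show ?thesis .
qed

lemma avg_U2_shift:
  "avg U2 (shift b w) = (sph2 s (sph2_base s) b / sph2 s (sph2_base s) (sph2_base s)) \<cdot>\<^sub>v w2"
    (is "_ = ?c \<cdot>\<^sub>v w2")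
proof -
  have h: "sph2 s (sph2_base s) (sph2_base s) \<noteq> 0"
    by (simp add: sph2_base_value)
  have "avg U2 (shift b w) + (- ?c) \<cdot>\<^sub>v w2 = 0\<^sub>v n"
  proof (rule orbit_orthogonal_imp_zero[OF w_carrier w_nonzero])
    fix g assume "g \<in> Gaff"
    then obtain a c where g: "g = (a, c)" "(a, c) \<in> Gaff"
      by (cases g) auto
    have "form (shift c w) (avg U2 (shift b w) + (- ?c) \<cdot>\<^sub>v w2)
        = (sph2 s c b * sph2 s (sph2_base s) (sph2_base s) - sph2 s (sph2_base s) b * sph2 s c (sph2_base s))
          / sph2 s (sph2_base s) (sph2_base s) * form w w"
      using h by (simp add: form_add_right form_shift_avg_U2 w2_def field_simps)
    then show "form (\<rho> g *\<^sub>v w) (avg U2 (shift b w) + (- ?c) \<cdot>\<^sub>v w2) = 0"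
      by (simp add: g rho_w sph2_rank_one)
  qed simp
  then show ?thesis
  proof (intro eq_vecI)
    fix i assume "avg U2 (shift b w) + (- ?c) \<cdot>\<^sub>v w2 = 0\<^sub>v n" "i < dim_vec (?c \<cdot>\<^sub>v w2)"
    then show "avg U2 (shift b w) $ i = (?c \<cdot>\<^sub>v w2) $ i"
      by (auto dest!: arg_cong[where f = "\<lambda>v. v $ i"])
  qed simp
qed

lemma fixed_U2_line: "fixed_space n \<rho> U2 = {t \<cdot>\<^sub>v w2 | t. True}"
proof (rule fixed_space_eq_line[OF affine_subgroup_U2 w_carrier w_nonzero w2_fixed])
  show "form w2 w2 \<noteq> 0"
    using form_w_nonzero by (simp add: form_w2_w2 sph2_base_value)
  fix g assume "g \<in> Gaff"
  then show "\<exists>t. avg U2 (\<rho> g *\<^sub>v w) = t \<cdot>\<^sub>v w2"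
    by (cases g) (auto simp: rho_w avg_U2_shift)
qed

lemma shift_4: "shift 4 w = sph s 4 \<cdot>\<^sub>v w"
proof -
  have "\<rho> g *\<^sub>v shift 4 w = shift 4 w" if "g \<in> U1" for g
  proof -
    have "g \<in> Gaff" "g \<in> {(1, 0), (3, 0), (5, 0), (7, 0)}"
      using that by (auto simp: U1_eq mem_Gaff_iff)
    then show ?thesis
      by (auto simp: rho_shift_U1_fixed[OF w_fixed]; simp add: shift_def)
  qed
  then have "shift 4 w \<in> fixed_space n \<rho> U1"
    by (simp add: fixed_space_def)
  then show ?thesis
    using avg_eq_self[OF affine_subgroup_U1] avg_U1_shift[of 4] by simp
qed

lemma not_iso_to_I:
  assumes "s \<noteq> Ind"
  shows "\<not> iso_to_I n \<rho>"
proof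
  assume iso: "iso_to_I n \<rho>"
  have "w = \<rho> (1, 4) *\<^sub>v w"
    using shift_4 assms by (cases s) (simp_all add: rho_w mem_Gaff_iff)
  also have "\<dots> = (-1) \<cdot>\<^sub>v w"
    using iso_to_I_rho_central[OF iso] by (intro eq_vecI) auto
  finally have w_neg: "w = (-1) \<cdot>\<^sub>v w" .
  have "w = 0\<^sub>v n"
  proof (rule eq_vecI)
    fix i assume "i < dim_vec (0\<^sub>v n :: rat vec)"
    with w_neg show "w $ i = (0\<^sub>v n :: rat vec) $ i"
      by (auto dest!: arg_cong[where f = "\<lambda>v. v $ i"])
  qed simp
  then show False
    using w_nonzero by contradiction
qed

end

locale spherical_vector_Ind = spherical_vector +
  assumes type_Ind: "s = Ind"
begin

lemma shift_add_4: "shift (b + 4) w = (-1) \<cdot>\<^sub>v shift b w"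
  using shift_shift[of w b 4] shift_4 by (simp add: type_Ind)

lemma sph_Ind_delta:
  assumes "m < 4" "j < 4"
  shows "sph Ind (j + 7 * m) = (if m = j then 1 else 0)"
proof -
  have "m = 0 \<or> m = 1 \<or> m = 2 \<or> m = 3" "j = 0 \<or> j = 1 \<or> j = 2 \<or> j = 3"
    using assms by presburger+
  then show ?thesis
    by (elim disjE) simp_all
qed

(* In the basis T_{1,j} w, j < 4, rho becomes I: T_{1,4} acts as -1 (shift_add_4), like
   multiplication by zeta^4.  The inverse reads off coordinates by pairing with the
   translates, whose Gram matrix is the identity by sph_Ind_delta. *)
definition shift_mat :: "rat mat" where
  "shift_mat = mat n 4 (\<lambda>(i, j). shift j w $ i)"

definition coord_row :: "nat \<Rightarrow> rat vec" where
  "coord_row m = (1 / form w w) \<cdot>\<^sub>v (transpose_mat B *\<^sub>v shift m w)"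

definition coord_mat :: "rat mat" where
  "coord_mat = mat 4 n (\<lambda>(m, i). coord_row m $ i)"

lemma shift_mat_carrier [simp]: "shift_mat \<in> carrier_mat n 4"
  by (simp add: shift_mat_def)

lemma coord_mat_carrier [simp]: "coord_mat \<in> carrier_mat 4 n"
  by (simp add: coord_mat_def)

lemma dim_shift_mat [simp]: "dim_row shift_mat = n" "dim_col shift_mat = 4"
  by (simp_all add: shift_mat_def)

lemma dim_coord_mat [simp]: "dim_row coord_mat = 4" "dim_col coord_mat = n"
  by (simp_all add: coord_mat_def)

lemma shift_mat_mult_carrier [simp]: "shift_mat *\<^sub>v y \<in> carrier_vec n"
  by (simp add: carrier_vecI)

lemma coord_mat_mult_carrier [simp]: "coord_mat *\<^sub>v x \<in> carrier_vec 4"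
  by (simp add: carrier_vecI)

lemma col_shift_mat: "j < 4 \<Longrightarrow> col shift_mat j = shift j w"
  by (intro eq_vecI) (auto simp: shift_mat_def)

lemma form_eq_transpose:
  "x \<in> carrier_vec n \<Longrightarrow> y \<in> carrier_vec n \<Longrightarrow> form x y = (transpose_mat B *\<^sub>v x) \<bullet> y"
  by (simp add: form_def transpose_vec_mult_scalar[of B n n])

lemma coord_mat_mult:
  assumes x: "x \<in> carrier_vec n" and m: "m < 4"
  shows "(coord_mat *\<^sub>v x) $ m = form (shift m w) x / form w w"
proof -
  have "row coord_mat m = coord_row m"
    using m by (intro eq_vecI) (simp_all add: coord_mat_def coord_row_def)
  then have "(coord_mat *\<^sub>v x) $ m = coord_row m \<bullet> x"
    using m by (simp add: coord_mat_def)
  also have "\<dots> = form (shift m w) x / form w w"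
    using x by (simp add: coord_row_def form_eq_transpose[of "shift m w" x])
  finally show ?thesis .
qed

lemma form_shift_mat:
  assumes x: "x \<in> carrier_vec n" and y: "y \<in> carrier_vec 4"
  shows "form x (shift_mat *\<^sub>v y) = (\<Sum>j<4. y $ j * form x (shift j w))"
proof -
  define v where "v = transpose_mat B *\<^sub>v x"
  have v: "v \<in> carrier_vec n"
    by (simp add: v_def carrier_vecI)
  have entry: "(shift_mat *\<^sub>v y) $ i = (\<Sum>j<4. shift j w $ i * y $ j)" if "i < n" for i
    using that y by (simp add: shift_mat_def scalar_prod_def lessThan_atLeast0)
  have "form x (shift_mat *\<^sub>v y) = v \<bullet> (shift_mat *\<^sub>v y)"
    using x y by (simp add: form_eq_transpose v_def)
  also have "\<dots> = (\<Sum>i<n. v $ i * (\<Sum>j<4. shift j w $ i * y $ j))"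
    by (simp add: scalar_prod_def lessThan_atLeast0 entry del: index_mult_mat_vec)
  also have "\<dots> = (\<Sum>j<4. y $ j * (\<Sum>i<n. v $ i * shift j w $ i))"
    by (simp add: sum_distrib_left sum.swap[of _ "{..<4}"] ac_simps)
  also have "\<dots> = (\<Sum>j<4. y $ j * form x (shift j w))"
    using x v by (simp add: form_eq_transpose scalar_prod_def lessThan_atLeast0 flip: v_def)
  finally show ?thesis .
qed

lemma coord_mat_shift_mat: "coord_mat * shift_mat = 1\<^sub>m 4"
proof (rule eq_matI)
  fix m j assume "m < dim_row (1\<^sub>m 4 :: rat mat)" "j < dim_col (1\<^sub>m 4 :: rat mat)"
  then have mj: "m < 4" "j < 4"
    by auto
  have "(coord_mat * shift_mat) $$ (m, j) = (coord_mat *\<^sub>v col shift_mat j) $ m"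
    using mj by simp
  also have "\<dots> = form (shift m w) (shift j w) / form w w"
    using mj by (simp add: col_shift_mat coord_mat_mult del: index_mult_mat_vec)
  also have "\<dots> = sph Ind (j + 7 * m)"
    using form_w_nonzero by (simp add: form_shift_shift type_Ind del: sph.simps)
  finally show "(coord_mat * shift_mat) $$ (m, j) = (1\<^sub>m 4 :: rat mat) $$ (m, j)"
    using mj by (simp add: sph_Ind_delta del: sph.simps)
qed auto

lemma shift_mat_coord_mat: "shift_mat * coord_mat = 1\<^sub>m n"
proof (rule mat_eq_one_if_fixes_all)
  fix x :: "rat vec" assume x: "x \<in> carrier_vec n"
  define z where "z = shift_mat *\<^sub>v (coord_mat *\<^sub>v x) + (-1) \<cdot>\<^sub>v x"
  have form_shift_x: "form (shift (j + 4) w) x = - form (shift j w) x" for j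
    using x by (simp add: shift_add_4)
  have "form (shift c w) z = (\<Sum>j<4. form (shift j w) x * sph Ind (j + 7 * c)) - form (shift c w) x" for c
    using x form_w_nonzero
    by (simp add: z_def form_add_right form_shift_mat coord_mat_mult form_shift_shift type_Ind
      del: sph.simps index_mult_mat_vec)
  then have "\<forall>c<8. form (shift c w) z = (\<Sum>j<4. form (shift j w) x * sph Ind (j + 7 * c)) - form (shift c w) x"
    by blast
  moreover have "{..<4::nat} = {0, 1, 2, 3}"
    by auto
  ultimately have "\<forall>c<8. form (shift c w) z = 0"
    using form_shift_x[of 0] form_shift_x[of 1] form_shift_x[of 2] form_shift_x[of 3]
    by (simp only: all_less_8_iff) simp
  then have "z = 0\<^sub>v n"
    using x by (intro orbit_orthogonal_imp_zero[OF w_carrier w_nonzero])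
      (auto simp: z_def rho_w mem_Gaff_iff split: prod.splits)
  have "(shift_mat * coord_mat) *\<^sub>v x = shift_mat *\<^sub>v (coord_mat *\<^sub>v x)"
    using x by (intro assoc_mult_mat_vec) auto
  also have "\<dots> = x"
  proof (rule eq_vecI)
    fix i assume "i < dim_vec x"
    with \<open>z = 0\<^sub>v n\<close> x show "(shift_mat *\<^sub>v (coord_mat *\<^sub>v x)) $ i = x $ i"
      by (auto simp: z_def dest!: arg_cong[where f = "\<lambda>v. v $ i"] simp del: index_mult_mat_vec)
  qed (use x in simp)
  finally show "(shift_mat * coord_mat) *\<^sub>v x = x" .
qed (simp add: carrier_matI)

lemma dim_eq_4: "n = 4"
  using shift_mat_carrier coord_mat_carrier shift_mat_coord_mat coord_mat_shift_mat
  by (rule mat_inverse_dims_eq)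

lemma shift_mat_zeta: "shift_mat *\<^sub>v zeta_coord k = shift k w"
proof (cases "k mod 8 < 4")
  case True
  then have "shift_mat *\<^sub>v zeta_coord k = col shift_mat (k mod 8)"
    by (simp add: zeta_coord_def mult_unit_vec_eq_col[OF shift_mat_carrier])
  then show ?thesis
    using True by (simp add: col_shift_mat shift_mod)
next
  case False
  define m where "m = k mod 8 - 4"
  have m: "m < 4" "k mod 8 = m + 4"
    using False by (auto simp: m_def)
  have "zeta_coord k = (-1) \<cdot>\<^sub>v unit_vec 4 m"
    using False by (intro eq_vecI) (auto simp: zeta_coord_def m_def)
  then have "shift_mat *\<^sub>v zeta_coord k = (-1) \<cdot>\<^sub>v shift m w"
    using m by (simp add: mult_mat_vec[OF shift_mat_carrier] mult_unit_vec_eq_col[OF shift_mat_carrier m(1)]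
      col_shift_mat)
  also have "\<dots> = shift k w"
    using shift_add_4[of m] shift_cong[of k "m + 4"] m by simp
  finally show ?thesis .
qed

lemma rho_shift_mat:
  assumes g: "g \<in> Gaff"
  shows "\<rho> g * shift_mat = shift_mat * I_rep g"
proof (rule mat_col_eqI)
  obtain a c where ac: "g = (a, c)"
    by (cases g)
  fix j assume "j < dim_col (shift_mat * I_rep g)"
  then have j: "j < 4"
    by simp
  have "col (\<rho> g * shift_mat) j = \<rho> g *\<^sub>v shift j w"
    using g j by (simp add: col_mult2[of _ n n _ 4] col_shift_mat)
  also have "\<dots> = shift_mat *\<^sub>v zeta_coord (c + a * j)"
    using g by (simp add: ac rho_shift_U1_fixed[OF w_fixed] shift_mat_zeta add.commute)
  also have "zeta_coord (c + a * j) = col (I_rep g) j"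
    using j by (intro eq_vecI) (auto simp: ac zeta_coord_def)
  also have "shift_mat *\<^sub>v col (I_rep g) j = col (shift_mat * I_rep g) j"
    using j by (simp add: col_mult2[of _ n 4 _ 4])
  finally show "col (\<rho> g * shift_mat) j = col (shift_mat * I_rep g) j" .
qed (use g in simp_all)

lemma iso_to_I: "iso_to_I n \<rho>"
  using shift_mat_carrier coord_mat_carrier coord_mat_shift_mat shift_mat_coord_mat rho_shift_mat dim_eq_4
  by (rule iso_to_I_if_conj)

end

context spherical_vector
begin

lemma iso_to_I_iff: "iso_to_I n \<rho> \<longleftrightarrow> s = Ind"
proof
  show "iso_to_I n \<rho> \<Longrightarrow> s = Ind"
    using not_iso_to_I by blast
  assume "s = Ind"
  then interpret spherical_vector_Ind n \<rho> B w s
    by unfold_locales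
  show "iso_to_I n \<rho>"
    by (rule iso_to_I)
qed

lemma regulator_constant:
  assumes "basis_mat n (fixed_space n \<rho> U1) k1 M1" "basis_mat n (fixed_space n \<rho> U2) k2 M2"
  shows "sq_class_eq (pairing_det U1 B M1 / pairing_det U2 B M2) (if iso_to_I n \<rho> then 2 else 1)"
proof -
  obtain \<alpha> where "\<alpha> \<noteq> 0" and det1: "pairing_det U1 B M1 = \<alpha>\<^sup>2 * form w w / 4"
    using pairing_det_line[OF w_carrier w_nonzero, of k1 M1 B U1] assms(1)
    by (auto simp: fixed_U1_line card_U1 form_def)
  have "form w2 w2 \<noteq> 0"
    using form_w_nonzero by (simp add: form_w2_w2 sph2_base_value)
  then have "w2 \<noteq> 0\<^sub>v n"
    by auto
  then obtain \<beta> where "\<beta> \<noteq> 0" and det2: "pairing_det U2 B M2 = \<beta>\<^sup>2 * form w2 w2 / 4"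
    using pairing_det_line[OF w2_carrier, of k2 M2 B U2] assms(2)
    by (auto simp: fixed_U2_line card_U2 form_def)
  have "pairing_det U1 B M1 / pairing_det U2 B M2 = (if s = Ind then 2 else 1) * (\<alpha> / \<beta>)\<^sup>2"
    using form_w_nonzero \<open>\<beta> \<noteq> 0\<close>
    by (simp add: det1 det2 form_w2_w2 sph2_base_value field_simps power2_eq_square)
  then have "pairing_det U1 B M1 / pairing_det U2 B M2 = (if iso_to_I n \<rho> then 2 else 1) * (\<alpha> / \<beta>)\<^sup>2"
    by (simp add: iso_to_I_iff)
  then show ?thesis
    unfolding sq_class_eq_def using \<open>\<alpha> \<noteq> 0\<close> \<open>\<beta> \<noteq> 0\<close> by (intro exI[of _ "\<alpha> / \<beta>"]) simp
qed

end

theorem mainTheorem15: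
  fixes n k1 k2 :: nat and \<rho> :: "nat \<times> nat \<Rightarrow> rat mat" and B M1 M2 :: "rat mat"
  assumes "irreducible_rep n \<rho>"
    and "invariant_pairing n \<rho> B"
    and "basis_mat n (fixed_space n \<rho> U1) k1 M1"
    and "basis_mat n (fixed_space n \<rho> U2) k2 M2"
  shows "sq_class_eq (pairing_det U1 B M1 / pairing_det U2 B M2)
           (if iso_to_I n \<rho> then 2 else 1)"
proof -
  interpret irrep_form n \<rho> B
    using assms(1,2) by unfold_locales (simp_all add: irreducible_rep_def)
  show ?thesis
  proof (cases "fixed_space n \<rho> U1 = {0\<^sub>v n}")
    case True
    then show ?thesis
      using assms(3,4) by (rule regulator_constant_no_U1_fixed)
  next
    case False
    then obtain v where v: "v \<in> fixed_space n \<rho> U1" "v \<noteq> 0\<^sub>v n"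
      using zero_fixed_space[of U1] affine_subgroup_U1 by (auto simp: affine_subgroup_def)
    obtain w s where "w \<in> fixed_space n \<rho> U1" "w \<noteq> 0\<^sub>v n" "\<And>a. hecke a w = sph s a \<cdot>\<^sub>v w"
      using hecke_eigenvector_exists[OF v] by blast
    then interpret spherical_vector n \<rho> B w s
      by unfold_locales
    show ?thesis
      using assms(3,4) by (rule regulator_constant)
  qed
qed

end
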